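(* Let $f$ be a Hamiltonian stationary torus and $h=h^{A,B}\in\mathrm{Spec}$ a multiplier of a holomorphic section with $A\ne0$. Then the complex dimension of the space $H^0_h$ of holomorphic sections with multiplier $h$ is at most $2$, and $\dim_{\mathbb C}H^0_{h}=2$ if and only if $A$ is a double point, that is $$A=-\frac i2\,\zeta\sqrt{1-\frac{|\beta_0|^2}{|\zeta|^2}},\qquad \zeta\in\Gamma^*,\ |\zeta|>|\beta_0|.$$
   Context: Identify $\mathbb R^4$ with $\mathbb H$ and $\mathbb C$ with $\mathrm{span}_{\mathbb R}\{1,i\}$; $\langle\cdot,\cdot\rangle$ is the Euclidean inner product on $\mathbb C\cong\mathbb R^2$. $\Gamma\subset\mathbb C$ a lattice, $\Gamma^*$ its dual lattice. A Hamiltonian stationary torus is a $\Gamma$-periodic conformal immersion $f:\mathbb C\to\mathbb H$ with $df=e^{j\beta/2}dz\,g$, $dz=dx+i\,dy$, $g$ nowhere zero, $\beta(z)=2\pi\langle\beta_0,z\rangle$ with $0\ne\beta_0\in\Gamma^*$. Convention $*dz=i\,dz$; left normal $N=e^{j\beta}i$. $\alpha:\mathbb C\to\mathbb H$ is holomorphic if $*d\alpha=N\,d\alpha$. For a homomorphism $h:\Gamma\to\mathbb C_*$, $H^0_h$ is the complex space of holomorphic $\alpha$ with $\alpha(z+\gamma)=\alpha(z)h(\gamma)$ ($\gamma\in\Gamma$); $\mathrm{Spec}=\{h:H^0_h\ne0\}$. $h^{A,B}(\gamma)=e^{2\pi(\langle A,\gamma\rangle-i\langle B,\gamma\rangle)}$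 for $(A,B)\in\mathbb C^2$. *)

theory Defs
  imports "HOL-Analysis.Analysis" "HOL-Library.Function_Algebras"
begin

text \<open>Quaternions are modelled as pairs of complex numbers: (a,b) stands for a + b j,
  where C = span{1,i} and j c = cnj c j, j^2 = -1.  The underlying real vector space
  complex * complex is R^4 with its Euclidean structure.\<close>

type_synonym quat = "complex \<times> complex"

definition qmul :: "quat \<Rightarrow> quat \<Rightarrow> quat" where
  "qmul p q = (fst p * fst q - snd p * cnj (snd q), fst p * snd q + snd p * cnj (fst q))"

definition qc :: "complex \<Rightarrow> quat" where
  "qc z = (z, 0)"

definition qexpj :: "real \<Rightarrow> quat" where
  "qexpj t = (complex_of_real (cos t), complex_of_real (sin t))"

definition is_lattice :: "complex set \<Rightarrow> bool" where
  "is_lattice \<Gamma> \<longleftrightarrow> (\<exists>w1 w2. Im (cnj w1 * w2) \<noteq> 0 \<and>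
      \<Gamma> = {of_int m * w1 + of_int n * w2 | m n. True})"

definition dual_lattice :: "complex set \<Rightarrow> complex set" where
  "dual_lattice \<Gamma> = {\<zeta>. \<forall>\<gamma>\<in>\<Gamma>. \<zeta> \<bullet> \<gamma> \<in> \<int>}"

definition betaf :: "complex \<Rightarrow> complex \<Rightarrow> real" where
  "betaf \<beta>0 z = 2 * pi * (\<beta>0 \<bullet> z)"

definition normalN :: "complex \<Rightarrow> complex \<Rightarrow> quat" where
  "normalN \<beta>0 z = qmul (qexpj (betaf \<beta>0 z)) (qc \<i>)"

definition ham_stat_torus :: "complex set \<Rightarrow> complex \<Rightarrow> (complex \<Rightarrow> quat) \<Rightarrow> (complex \<Rightarrow> quat) \<Rightarrow> bool" where
  "ham_stat_torus \<Gamma> \<beta>0 f g \<longleftrightarrow>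
     is_lattice \<Gamma> \<and> \<beta>0 \<in> dual_lattice \<Gamma> \<and> \<beta>0 \<noteq> 0 \<and>
     (\<forall>z. g z \<noteq> 0) \<and>
     (\<forall>z. (f has_derivative (\<lambda>v. qmul (qmul (qexpj (betaf \<beta>0 z / 2)) (qc v)) (g z))) (at z)) \<and>
     (\<forall>\<gamma>\<in>\<Gamma>. \<forall>z. f (z + \<gamma>) = f z)"

text \<open>Holomorphic: *d alpha = N d alpha with *omega = omega o J (so *dz = i dz), i.e.
  d alpha (i v) = N d alpha (v); alpha is required to be C^1.\<close>
definition holo :: "complex \<Rightarrow> (complex \<Rightarrow> quat) \<Rightarrow> bool" where
  "holo \<beta>0 \<alpha> \<longleftrightarrow> (\<exists>D. (\<forall>z. (\<alpha> has_derivative D z) (at z)) \<and>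
      continuous_on UNIV (\<lambda>z. D z 1) \<and> continuous_on UNIV (\<lambda>z. D z \<i>) \<and>
      (\<forall>z v. D z (\<i> * v) = qmul (normalN \<beta>0 z) (D z v)))"

definition H0 :: "complex set \<Rightarrow> complex \<Rightarrow> (complex \<Rightarrow> complex) \<Rightarrow> (complex \<Rightarrow> quat) set" where
  "H0 \<Gamma> \<beta>0 h = {\<alpha>. holo \<beta>0 \<alpha> \<and> (\<forall>\<gamma>\<in>\<Gamma>. \<forall>z. \<alpha> (z + \<gamma>) = qmul (\<alpha> z) (qc (h \<gamma>)))}"

definition Spec :: "complex set \<Rightarrow> complex \<Rightarrow> (complex \<Rightarrow> complex) set" where
  "Spec \<Gamma> \<beta>0 = {h. (\<forall>\<gamma>\<in>\<Gamma>. h \<gamma> \<noteq> 0) \<and> H0 \<Gamma> \<beta>0 h \<noteq> {0}}"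

definition hAB :: "complex \<Rightarrow> complex \<Rightarrow> complex \<Rightarrow> complex" where
  "hAB A B \<gamma> = exp (2 * of_real pi * (of_real (A \<bullet> \<gamma>) - \<i> * of_real (B \<bullet> \<gamma>)))"

definition rscale :: "complex \<Rightarrow> (complex \<Rightarrow> quat) \<Rightarrow> (complex \<Rightarrow> quat)" where
  "rscale c \<alpha> = (\<lambda>z. qmul (\<alpha> z) (qc c))"

lemma vector_space_rscale: "vector_space rscale"
  by unfold_locales
     (auto simp: rscale_def qmul_def qc_def fun_eq_iff algebra_simps)

definition cdim :: "(complex \<Rightarrow> quat) set \<Rightarrow> nat" where
  "cdim V = vector_space.dim rscale V"

definition cfinite_dim :: "(complex \<Rightarrow> quat) set \<Rightarrow> bool" where
  "cfinite_dim V \<longleftrightarrow> (\<exists>B. finite B \<and> B \<subseteq> V \<and> module.span rscale B = V)"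

definition double_point :: "complex set \<Rightarrow> complex \<Rightarrow> complex \<Rightarrow> bool" where
  "double_point \<Gamma> \<beta>0 A \<longleftrightarrow> (\<exists>\<zeta>\<in>dual_lattice \<Gamma>. norm \<zeta> > norm \<beta>0 \<and>
      A = - (\<i> / 2) * \<zeta> * of_real (sqrt (1 - (norm \<beta>0)\<^sup>2 / (norm \<zeta>)\<^sup>2)))"

end

theory Submission
  imports Defs "HOL-Library.Periodic_Fun"
begin

text \<open>Write a quaternionic section as \<open>\<alpha> = a + b j\<close> and split it into the complex functions
  \<open>\<alpha>\<^sub>\<plusminus> = a \<plusminus> i cnj b\<close>. Right multiplication by complex numbers acts on both by ordinary
  multiplication, so both have the multiplier \<open>h = h\<^sup>A\<^sup>,\<^sup>B\<close>, while left multiplication by the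
  normal \<open>N = e\<^sup>j\<^sup>\<beta> i\<close> exchanges them up to the factors \<open>i e\<^sup>\<plusminus>\<^sup>i\<^sup>\<beta>\<close>. Expanding \<open>\<alpha>\<^sub>+\<close> in the exponentials
  with multiplier \<open>h\<close>, whose frequencies \<open>C\<close> run over \<open>B + \<Gamma>\<^sup>*\<close>, and \<open>\<alpha>\<^sub>-\<close> correspondingly at the shifted
  frequencies \<open>C + \<beta>\<^sub>0\<close>, integration by parts turns \<open>*d\<alpha> = N d\<alpha>\<close> into one \<open>2\<times>2\<close> linear system per
  frequency. Its determinant vanishes iff \<open>\<langle>A, 2C + \<beta>\<^sub>0\<rangle> = 0\<close> and \<open>|A|\<^sup>2 = \<langle>C, C + \<beta>\<^sub>0\<rangle>\<close>; for \<open>A \<noteq> 0\<close>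
  these conditions single out two points \<open>C\<^sub>\<plusminus>\<close>, each carrying at most a one-dimensional space of
  coefficients. Completeness of the characters on the torus (Stone-Weierstrass) shows that the
  corresponding exponential solutions span \<open>H\<^sup>0\<^sub>h\<close>, so its dimension is the number of \<open>C\<^sub>\<plusminus>\<close> lying in
  \<open>B + \<Gamma>\<^sup>*\<close>; both do iff \<open>C\<^sub>+ - C\<^sub>- \<in> \<Gamma>\<^sup>*\<close>, which is the double point condition.\<close>

section \<open>Fourier analysis on the unit square\<close>

definition torus_char :: "int \<Rightarrow> int \<Rightarrow> real \<times> real \<Rightarrow> complex" where
  "torus_char m n x = exp (2 * of_real pi * \<i> * (of_int m * of_real (fst x) + of_int n * of_real (snd x)))"

lemma torus_char_mult: "torus_char m n x * torus_char m' n' x = torus_char (m + m') (n + n') x"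
  unfolding torus_char_def by (simp add: exp_add[symmetric] algebra_simps)

lemma continuous_on_torus_char: "continuous_on S (torus_char m n)"
  unfolding torus_char_def by (intro continuous_intros)

inductive_set trig_poly :: "(real \<times> real \<Rightarrow> complex) set" where
  trig_poly_char: "torus_char m n \<in> trig_poly"
| trig_poly_scale: "f \<in> trig_poly \<Longrightarrow> (\<lambda>x. c * f x) \<in> trig_poly"
| trig_poly_add: "f \<in> trig_poly \<Longrightarrow> g \<in> trig_poly \<Longrightarrow> (\<lambda>x. f x + g x) \<in> trig_poly"

lemma trig_poly_continuous_on: "f \<in> trig_poly \<Longrightarrow> continuous_on S f"
  by (induction rule: trig_poly.induct)
     (auto intro!: continuous_on_mult continuous_on_add continuous_on_const continuous_on_torus_char)

lemma trig_poly_const: "(\<lambda>x. c) \<in> trig_poly"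
  using trig_poly_scale[OF trig_poly_char[of 0 0], of c] by (simp add: torus_char_def)

lemma trig_poly_mult_char: "f \<in> trig_poly \<Longrightarrow> (\<lambda>x. torus_char m n x * f x) \<in> trig_poly"
proof (induction rule: trig_poly.induct)
  case (trig_poly_char m' n')
  then show ?case by (simp add: torus_char_mult trig_poly.trig_poly_char)
next
  case (trig_poly_scale f c)
  then show ?case using trig_poly.trig_poly_scale[OF trig_poly_scale.IH, of c] by (simp add: algebra_simps)
next
  case (trig_poly_add f g)
  then show ?case using trig_poly.trig_poly_add[OF trig_poly_add.IH] by (simp add: algebra_simps)
qed

lemma trig_poly_mult: "f \<in> trig_poly \<Longrightarrow> g \<in> trig_poly \<Longrightarrow> (\<lambda>x. f x * g x) \<in> trig_poly"
proof (induction rule: trig_poly.induct)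
  case (trig_poly_char m n)
  then show ?case by (rule trig_poly_mult_char)
next
  case (trig_poly_scale f c)
  then show ?case using trig_poly.trig_poly_scale[OF trig_poly_scale.IH, of c] by (simp add: algebra_simps)
next
  case (trig_poly_add f g')
  then show ?case using trig_poly.trig_poly_add[OF trig_poly_add.IH] by (simp add: algebra_simps)
qed

lemma trig_poly_cos:
  "(\<lambda>x. complex_of_real (cos (2 * pi * (of_int m * fst x + of_int n * snd x)))) \<in> trig_poly"
proof -
  have "(\<lambda>x. (1/2) * torus_char m n x + (1/2) * torus_char (-m) (-n) x) \<in> trig_poly"
    by (intro trig_poly_add trig_poly_scale trig_poly_char)
  moreover have "(\<lambda>x. (1/2) * torus_char m n x + (1/2) * torus_char (-m) (-n) x)
      = (\<lambda>x. complex_of_real (cos (2 * pi * (of_int m * fst x + of_int n * snd x))))"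
    by (rule ext, subst cos_of_real[symmetric], subst cos_exp_eq)
       (simp add: torus_char_def field_simps exp_minus)
  ultimately show ?thesis by simp
qed

lemma trig_poly_sin:
  "(\<lambda>x. complex_of_real (sin (2 * pi * (of_int m * fst x + of_int n * snd x)))) \<in> trig_poly"
proof -
  have "(\<lambda>x. (-\<i>/2) * torus_char m n x + (\<i>/2) * torus_char (-m) (-n) x) \<in> trig_poly"
    by (intro trig_poly_add trig_poly_scale trig_poly_char)
  moreover have "(\<lambda>x. (-\<i>/2) * torus_char m n x + (\<i>/2) * torus_char (-m) (-n) x)
      = (\<lambda>x. complex_of_real (sin (2 * pi * (of_int m * fst x + of_int n * snd x))))"
    by (rule ext, subst sin_of_real[symmetric], subst sin_exp_eq)
       (simp add: torus_char_def field_simps exp_minus)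
  ultimately show ?thesis by simp
qed

text \<open>Doubly periodic functions are functions on the torus, embedded in \<open>\<complex>\<^sup>2\<close> by \<open>torus_embed\<close>;
  restricted to it, complex polynomials are trigonometric polynomials, so Stone-Weierstrass applies.\<close>

definition torus_embed :: "real \<times> real \<Rightarrow> complex \<times> complex" where
  "torus_embed x = (cis (2 * pi * fst x), cis (2 * pi * snd x))"

lemma linear_complex_pair_expansion:
  fixes r :: "complex \<times> complex \<Rightarrow> real"
  assumes "linear r"
  shows "r (u, v) = Re u * r (1, 0) + Im u * r (\<i>, 0) + Re v * r (0, 1) + Im v * r (0, \<i>)"
proof -
  have "(u, v) = Re u *\<^sub>R (1, 0) + Im u *\<^sub>R (\<i>, 0) + Re v *\<^sub>R (0, 1) + Im v *\<^sub>R (0, \<i>)"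
    by (simp add: prod_eq_iff complex_eq_iff)
  then have "r (u, v) = r (Re u *\<^sub>R (1, 0) + Im u *\<^sub>R (\<i>, 0) + Re v *\<^sub>R (0, 1) + Im v *\<^sub>R (0, \<i>))"
    by (rule arg_cong)
  then show ?thesis
    by (simp only: linear_add[OF assms] linear_scale[OF assms] real_scaleR_def)
qed

lemma real_polynomial_function_on_torus:
  "real_polynomial_function r \<Longrightarrow> (\<lambda>x. complex_of_real (r (torus_embed x))) \<in> trig_poly"
proof (induction rule: real_polynomial_function.induct)
  case (linear r)
  have "r (torus_embed x) = cos (2 * pi * fst x) * r (1, 0) + sin (2 * pi * fst x) * r (\<i>, 0)
      + cos (2 * pi * snd x) * r (0, 1) + sin (2 * pi * snd x) * r (0, \<i>)" for x
    using linear_complex_pair_expansion[OF bounded_linear.linear[OF linear],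
        of "cis (2 * pi * fst x)" "cis (2 * pi * snd x)"]
    by (simp add: torus_embed_def)
  then have "(\<lambda>x. complex_of_real (r (torus_embed x))) =
      (\<lambda>x. of_real (r (1, 0)) * complex_of_real (cos (2 * pi * fst x))
        + of_real (r (\<i>, 0)) * complex_of_real (sin (2 * pi * fst x))
        + (of_real (r (0, 1)) * complex_of_real (cos (2 * pi * snd x))
        + of_real (r (0, \<i>)) * complex_of_real (sin (2 * pi * snd x))))"
    by (simp add: fun_eq_iff mult.commute)
  also have "\<dots> \<in> trig_poly"
    using trig_poly_cos[of 1 0] trig_poly_sin[of 1 0] trig_poly_cos[of 0 1] trig_poly_sin[of 0 1]
    by (intro trig_poly_add trig_poly_scale) simp_all
  finally show ?case .
next
  case (const c)
  show ?case by (rule trig_poly_const)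
next
  case (add f g)
  show ?case using trig_poly_add[OF add.IH] by simp
next
  case (mult f g)
  show ?case using trig_poly_mult[OF mult.IH] by simp
qed

lemma polynomial_function_on_torus:
  fixes p :: "complex \<times> complex \<Rightarrow> complex"
  assumes "polynomial_function p"
  shows "(\<lambda>x. p (torus_embed x)) \<in> trig_poly"
proof -
  have "real_polynomial_function (\<lambda>y. Re (p y))" "real_polynomial_function (\<lambda>y. Im (p y))"
    using assms unfolding polynomial_function_iff_Basis_inner by (auto simp: Basis_complex_def)
  then have "(\<lambda>x. complex_of_real (Re (p (torus_embed x))) + \<i> * complex_of_real (Im (p (torus_embed x))))
      \<in> trig_poly"
    by (intro trig_poly_add trig_poly_scale real_polynomial_function_on_torus)
  then show ?thesis by (simp add: complex_eq[symmetric])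
qed

lemma cis_2pi_eq_on_unit_interval:
  assumes "s \<in> {0..1}" "s' \<in> {0..1}" "cis (2 * pi * s) = cis (2 * pi * s')"
  shows "s = s' \<or> (s = 0 \<and> s' = 1) \<or> (s = 1 \<and> s' = 0)"
proof -
  have "exp (\<i> * complex_of_real (2 * pi * s)) = exp (\<i> * complex_of_real (2 * pi * s'))"
    using assms(3) by (simp add: cis_conv_exp)
  then obtain n :: int where "\<i> * complex_of_real (2 * pi * s) = \<i> * complex_of_real (2 * pi * s') + of_int (2 * n) * pi * \<i>"
    unfolding exp_eq by blast
  then have "2 * pi * s = 2 * pi * (s' + of_int n)"
    by (simp add: complex_eq_iff algebra_simps)
  then have "s = s' + of_int n" by simp
  moreover from this have "n \<in> {-1, 0, 1}" using assms(1,2) by auto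
  ultimately show ?thesis using assms(1,2) by auto
qed

lemma doubly_periodic_eq_if_torus_embed_eq:
  assumes per1: "\<And>s t. G (s + 1, t) = G (s, t)" and per2: "\<And>s t. G (s, t + 1) = G (s, t)"
    and "x \<in> cbox (0,0) (1,1)" "y \<in> cbox (0,0) (1,1)" "torus_embed x = torus_embed y"
  shows "G x = G y"
proof -
  obtain s t s' t' where xy: "x = (s, t)" "y = (s', t')" by fastforce
  have "s = s' \<or> (s = 0 \<and> s' = 1) \<or> (s = 1 \<and> s' = 0)"
    by (rule cis_2pi_eq_on_unit_interval) (use assms(3-5) xy in \<open>auto simp: torus_embed_def cbox_Pair_iff\<close>)
  moreover have "t = t' \<or> (t = 0 \<and> t' = 1) \<or> (t = 1 \<and> t' = 0)"
    by (rule cis_2pi_eq_on_unit_interval) (use assms(3-5) xy in \<open>auto simp: torus_embed_def cbox_Pair_iff\<close>)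
  ultimately show ?thesis using xy per1[of 0] per2[of _ 0] by auto
qed

lemma doubly_periodic_factors_through_torus:
  fixes G :: "real \<times> real \<Rightarrow> 'a::topological_space"
  assumes cont: "continuous_on UNIV G"
    and per1: "\<And>s t. G (s + 1, t) = G (s, t)" and per2: "\<And>s t. G (s, t + 1) = G (s, t)"
  obtains g where "continuous_on (torus_embed ` cbox (0,0) (1,1)) g"
    and "\<And>x. x \<in> cbox (0,0) (1,1) \<Longrightarrow> g (torus_embed x) = G x"
proof -
  define S :: "(real \<times> real) set" where "S = cbox (0,0) (1,1)"
  have ctor: "continuous_on S torus_embed" unfolding torus_embed_def by (intro continuous_intros)
  define g where "g y = G (SOME x. x \<in> S \<and> torus_embed x = y)" for y
  have g: "g (torus_embed x) = G x" if "x \<in> S" for x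
  proof -
    have "(SOME x'. x' \<in> S \<and> torus_embed x' = torus_embed x) \<in> S \<and>
        torus_embed (SOME x'. x' \<in> S \<and> torus_embed x' = torus_embed x) = torus_embed x"
      by (rule someI_ex) (use that in blast)
    then show ?thesis
      unfolding g_def S_def using doubly_periodic_eq_if_torus_embed_eq[OF per1 per2] that S_def by blast
  qed
  have "continuous_on (torus_embed ` S) g"
    unfolding continuous_openin_preimage_eq
  proof (intro allI impI)
    fix U :: "'a set" assume "open U"
    have "S \<inter> torus_embed -` (torus_embed ` S \<inter> g -` U) = S \<inter> G -` U"
      by (rule set_eqI, rename_tac x, case_tac "x \<in> S") (simp_all add: g)
    moreover have "openin (top_of_set S) (S \<inter> G -` U)"
      using continuous_on_subset[OF cont, of S] \<open>open U\<close> continuous_openin_preimage_eq by blast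
    ultimately show "openin (top_of_set (torus_embed ` S)) (torus_embed ` S \<inter> g -` U)"
      using Abstract_Topology_2.continuous_imp_quotient_map[OF ctor refl, of "torus_embed ` S \<inter> g -` U"]
      by (simp add: S_def)
  qed
  then show ?thesis using that g unfolding S_def by blast
qed

lemma doubly_periodic_trig_poly_approx:
  fixes G :: "real \<times> real \<Rightarrow> complex"
  assumes "continuous_on UNIV G"
    and "\<And>s t. G (s + 1, t) = G (s, t)" "\<And>s t. G (s, t + 1) = G (s, t)" and "e > 0"
  obtains T where "T \<in> trig_poly" "\<And>x. x \<in> cbox (0,0) (1,1) \<Longrightarrow> norm (G x - T x) < e"
proof -
  obtain g where g: "continuous_on (torus_embed ` cbox (0,0) (1,1)) g"
    "\<And>x. x \<in> cbox (0,0) (1,1) \<Longrightarrow> g (torus_embed x) = G x"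
    using doubly_periodic_factors_through_torus assms(1-3) by metis
  have "compact (torus_embed ` cbox (0,0) (1,1))"
    by (intro compact_continuous_image) (auto simp: torus_embed_def intro!: continuous_intros)
  then obtain p where "polynomial_function p" "\<forall>y \<in> torus_embed ` cbox (0,0) (1,1). norm (g y - p y) < e"
    using Stone_Weierstrass_polynomial_function[OF _ g(1) assms(4)] by blast
  then show ?thesis
    using that[of "\<lambda>x. p (torus_embed x)"] polynomial_function_on_torus g(2) by auto
qed

lemma doubly_periodic_frac:
  fixes F :: "real \<times> real \<Rightarrow> 'a"
  assumes "\<And>s t. F (s + 1, t) = F (s, t)" "\<And>s t. F (s, t + 1) = F (s, t)"
  shows "F (s, t) = F (frac s, frac t)"
proof -
  interpret fst: periodic_fun_simple' "\<lambda>s. F (s, t)" by unfold_locales (rule assms(1))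
  interpret snd: periodic_fun_simple' "\<lambda>t. F (frac s, t)" by unfold_locales (rule assms(2))
  have "F (s, t) = F (frac s, t)" using fst.plus_of_int[of "frac s" "\<lfloor>s\<rfloor>"] by (simp add: frac_def)
  also have "\<dots> = F (frac s, frac t)" using snd.plus_of_int[of "frac t" "\<lfloor>t\<rfloor>"] by (simp add: frac_def)
  finally show ?thesis .
qed

lemma integral_exp_2pi_int:
  "integral {0..1} (\<lambda>t::real. exp (2 * of_real pi * \<i> * (of_int q * of_real t))) = (if q = 0 then 1 else 0)"
proof (cases "q = 0")
  case False
  define c where "c = 2 * of_real pi * \<i> * (of_int q :: complex)"
  have "c \<noteq> 0" unfolding c_def using False by simp
  have "((\<lambda>t::real. exp (c * of_real t)) has_integral (exp (c * of_real 1) / c - exp (c * of_real 0) / c)) {0..1}"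
  proof (rule fundamental_theorem_of_calculus)
    show "((\<lambda>t. exp (c * of_real t) / c) has_vector_derivative exp (c * of_real t)) (at t within {0..1})"
      for t :: real
      using \<open>c \<noteq> 0\<close> by (auto intro!: derivative_eq_intros has_vector_derivative_real_field)
  qed simp
  moreover have "exp (c * of_real 1) = 1"
    unfolding c_def using exp_integer_2pi[of "of_int q"] by (simp add: mult_ac)
  ultimately show ?thesis using False unfolding c_def by (simp add: integral_unique algebra_simps)
qed simp

lemma integral_torus_char:
  "integral (cbox (0,0) (1,1)) (torus_char m n) = (if m = 0 \<and> n = 0 then 1 else 0)"
proof -
  have split: "torus_char m n (s, t) =
      exp (2 * of_real pi * \<i> * (of_int m * of_real s)) * exp (2 * of_real pi * \<i> * (of_int n * of_real t))"
    for s t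
    unfolding torus_char_def by (simp add: exp_add[symmetric] algebra_simps)
  have "integral (cbox (0,0) (1,1)) (torus_char m n) =
      integral {0..1} (\<lambda>s. integral {0..1} (\<lambda>t. torus_char m n (s, t)))"
    using integral_prod_continuous[OF continuous_on_torus_char] by (simp add: cbox_interval)
  also have "\<dots> = (if m = 0 \<and> n = 0 then 1 else 0)"
    by (simp add: split integral_exp_2pi_int)
  finally show ?thesis .
qed

lemma integral_mult_trig_poly_eq_0:
  fixes F :: "real \<times> real \<Rightarrow> complex"
  assumes cont: "continuous_on (cbox (0,0) (1,1)) F"
    and coeffs: "\<And>m n. integral (cbox (0,0) (1,1)) (\<lambda>x. F x * torus_char m n x) = 0"
    and "T \<in> trig_poly"
  shows "integral (cbox (0,0) (1,1)) (\<lambda>x. F x * T x) = 0"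
  using \<open>T \<in> trig_poly\<close>
proof (induction rule: trig_poly.induct)
  case (trig_poly_scale f c)
  then show ?case by (simp add: mult.left_commute[of _ c])
next
  case (trig_poly_add f g)
  have "(\<lambda>x. F x * f x) integrable_on cbox (0,0) (1,1)" "(\<lambda>x. F x * g x) integrable_on cbox (0,0) (1,1)"
    using trig_poly_continuous_on[OF trig_poly_add.hyps(1)] trig_poly_continuous_on[OF trig_poly_add.hyps(2)]
    by (auto intro!: integrable_continuous continuous_on_mult cont)
  then show ?case using trig_poly_add.IH by (simp add: distrib_left integral_add)
qed (rule coeffs)

lemma norm_integral_mult_cnj_le:
  fixes F :: "real \<times> real \<Rightarrow> complex"
  assumes cont: "continuous_on UNIV F"
    and per1: "\<And>s t. F (s + 1, t) = F (s, t)" and per2: "\<And>s t. F (s, t + 1) = F (s, t)"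
    and coeffs: "\<And>m n. integral (cbox (0,0) (1,1)) (\<lambda>x. F x * torus_char m n x) = 0"
    and bound: "\<And>x. x \<in> cbox (0,0) (1,1) \<Longrightarrow> norm (F x) \<le> M" and "e > 0"
  shows "norm (integral (cbox (0,0) (1,1)) (\<lambda>x. F x * cnj (F x))) \<le> M * e"
proof -
  define S :: "(real \<times> real) set" where "S = cbox (0,0) (1,1)"
  have cF: "continuous_on S F" using cont continuous_on_subset by blast
  obtain T where T: "T \<in> trig_poly" "\<And>x. x \<in> S \<Longrightarrow> norm (cnj (F x) - T x) < e"
    using doubly_periodic_trig_poly_approx[of "\<lambda>x. cnj (F x)" e] cont per1 per2 \<open>e > 0\<close>
    unfolding S_def by (metis continuous_on_cnj)
  have int: "(\<lambda>x. F x * (cnj (F x) - T x)) integrable_on S" "(\<lambda>x. F x * T x) integrable_on S"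
    using cF trig_poly_continuous_on[OF T(1)] unfolding S_def
    by (auto intro!: integrable_continuous continuous_intros)
  have "integral S (\<lambda>x. F x * cnj (F x)) = integral S (\<lambda>x. F x * (cnj (F x) - T x))"
    using integral_add[OF int] integral_mult_trig_poly_eq_0[OF cF[unfolded S_def] coeffs T(1)]
    unfolding S_def by (simp add: algebra_simps)
  also have "norm \<dots> \<le> M * e"
  proof -
    have "0 \<le> M" using order_trans[OF norm_ge_zero bound[of "(0,0)"]] by (simp add: cbox_Pair_iff)
    moreover have "norm (F x * (cnj (F x) - T x)) \<le> M * e" if "x \<in> S" for x
      unfolding norm_mult using that \<open>0 \<le> M\<close> unfolding S_def
      by (intro mult_mono bound less_imp_le[OF T(2)] norm_ge_zero) (auto simp: S_def)
    ultimately show ?thesis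
      using has_integral_bound[of "M * e" "\<lambda>x. F x * (cnj (F x) - T x)" _ "(0,0)" "(1,1)"]
        int(1) \<open>e > 0\<close>
      by (auto simp: S_def content_Pair integrable_integral)
  qed
  finally show ?thesis unfolding S_def .
qed

lemma doubly_periodic_integral_norm_eq_0:
  fixes F :: "real \<times> real \<Rightarrow> complex"
  assumes cont: "continuous_on UNIV F"
    and per1: "\<And>s t. F (s + 1, t) = F (s, t)" and per2: "\<And>s t. F (s, t + 1) = F (s, t)"
    and coeffs: "\<And>m n. integral (cbox (0,0) (1,1)) (\<lambda>x. F x * torus_char m n x) = 0"
  shows "integral (cbox (0,0) (1,1)) (\<lambda>x. (norm (F x))\<^sup>2) = 0"
proof -
  define I where "I = integral (cbox (0,0) (1,1)) (\<lambda>x. F x * cnj (F x))"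
  have "bounded (F ` cbox (0,0) (1,1))"
    by (intro compact_imp_bounded compact_continuous_image continuous_on_subset[OF cont]) auto
  then obtain M where M: "\<And>x. x \<in> cbox (0,0) (1,1) \<Longrightarrow> norm (F x) \<le> M" "M \<ge> 0"
    by (metis bounded_pos image_eqI less_imp_le)
  have "norm I \<le> e" if "e > 0" for e
  proof -
    have "norm I \<le> M * (e / (M + 1))"
      unfolding I_def by (intro norm_integral_mult_cnj_le[OF assms M(1)] divide_pos_pos) (use that M(2) in auto)
    also have "\<dots> \<le> e" using that M(2) by (simp add: field_simps)
    finally show ?thesis .
  qed
  then have "I = 0" using field_le_epsilon[of "norm I" 0] by simp
  moreover have "integral (cbox (0,0) (1,1)) (\<lambda>x. (norm (F x))\<^sup>2) = Re I"
    using integral_linear[OF _ bounded_linear_Re, of "\<lambda>x. F x * cnj (F x)" "cbox (0,0) (1,1)"]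
      continuous_on_subset[OF cont]
    unfolding I_def by (simp add: o_def integrable_continuous continuous_intros complex_mult_cnj cmod_power2)
  ultimately show ?thesis by simp
qed

lemma torus_fourier_uniqueness:
  fixes F :: "real \<times> real \<Rightarrow> complex"
  assumes cont: "continuous_on UNIV F"
    and per1: "\<And>s t. F (s + 1, t) = F (s, t)" and per2: "\<And>s t. F (s, t + 1) = F (s, t)"
    and coeffs: "\<And>m n. integral (cbox (0,0) (1,1)) (\<lambda>x. F x * torus_char m n x) = 0"
  shows "F x = 0"
proof -
  have cont_sq: "continuous_on (cbox (0,0) (1,1)) (\<lambda>x. (norm (F x))\<^sup>2)"
    by (intro continuous_intros continuous_on_subset[OF cont]) auto
  have "((\<lambda>x. (norm (F x))\<^sup>2) has_integral 0) (cbox (0,0) (1,1))"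
    using doubly_periodic_integral_norm_eq_0[OF assms] integrable_continuous[OF cont_sq]
    by (metis integrable_integral)
  then have "(norm (F y))\<^sup>2 = 0" if "y \<in> cbox (0,0) (1,1)" for y
    using has_integral_0_cbox_imp_0[of "(0,0)" "(1,1)" "\<lambda>x. (norm (F x))\<^sup>2" y] cont_sq that
    by (auto simp: box_ne_empty Basis_prod_def)
  moreover obtain s t where "x = (s, t)" by fastforce
  moreover have "(frac s, frac t) \<in> cbox (0,0) (1,1)"
    by (auto simp: cbox_Pair_iff frac_lt_1 less_imp_le)
  ultimately show ?thesis using doubly_periodic_frac[OF per1 per2, of s t] by simp
qed

lemma integral_derivative_along_period_eq_0:
  fixes G :: "complex \<Rightarrow> complex"
  assumes G': "\<And>z. (G has_derivative G' z) (at z)" and per: "\<And>z. G (z + u) = G z"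
  shows "integral {0..1} (\<lambda>t. G' (p + of_real t * u) u) = 0"
proof -
  have "((\<lambda>t. G' (p + of_real t * u) u) has_integral G (p + of_real 1 * u) - G (p + of_real 0 * u)) {0..1}"
  proof (rule fundamental_theorem_of_calculus)
    fix t :: real
    have "((\<lambda>t. p + of_real t * u) has_vector_derivative u) (at t within {0..1})"
      by (auto intro!: derivative_eq_intros has_vector_derivative_real_field)
    from vector_derivative_diff_chain_within[OF this has_derivative_at_withinI[OF G']]
    show "((\<lambda>t. G (p + of_real t * u)) has_vector_derivative G' (p + of_real t * u) u) (at t within {0..1})"
      by (simp add: o_def)
  qed simp
  then show ?thesis using per[of p] by (simp add: integral_unique)
qed

lemma has_derivative_exp_bounded_linear:
  fixes E :: "'a::real_normed_vector \<Rightarrow> complex"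
  assumes "bounded_linear E"
  shows "((\<lambda>z. exp (E z)) has_derivative (\<lambda>h. exp (E z) * E h)) (at z)"
proof -
  have "(exp has_derivative (\<lambda>h. exp (E z) * h)) (at (E z))"
    using DERIV_exp[of "E z"] by (simp add: has_field_derivative_def)
  from has_derivative_compose[OF bounded_linear.has_derivative[OF assms has_derivative_ident] this]
  show ?thesis .
qed

section \<open>Lattices and their duals\<close>

lemma dual_lattice_add: "a \<in> dual_lattice \<Gamma> \<Longrightarrow> b \<in> dual_lattice \<Gamma> \<Longrightarrow> a + b \<in> dual_lattice \<Gamma>"
  unfolding dual_lattice_def by (auto simp: inner_add_left)

lemma dual_lattice_diff: "a \<in> dual_lattice \<Gamma> \<Longrightarrow> b \<in> dual_lattice \<Gamma> \<Longrightarrow> a - b \<in> dual_lattice \<Gamma>"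
  unfolding dual_lattice_def by (auto simp: inner_diff_left)

lemma inner_half_diff_half_add:
  fixes W b :: complex
  shows "((1/2) *\<^sub>R (W - b)) \<bullet> ((1/2) *\<^sub>R (W - b) + b) = ((norm W)\<^sup>2 - (norm b)\<^sup>2) / 4"
proof -
  have "(1/2) *\<^sub>R (W - b) + b = (1/2) *\<^sub>R (W + b)" by (simp add: scaleR_conv_of_real field_simps)
  then have "((1/2) *\<^sub>R (W - b)) \<bullet> ((1/2) *\<^sub>R (W - b) + b) = (1/4) * ((W - b) \<bullet> (W + b))" by simp
  also have "(W - b) \<bullet> (W + b) = W \<bullet> W - b \<bullet> b"
    by (simp add: inner_diff_left inner_add_right inner_commute[of b W] algebra_simps)
  finally show ?thesis by (simp add: power2_norm_eq_inner)
qed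

lemma orthogonal_complex_eq:
  fixes A W :: complex
  assumes "A \<noteq> 0" "A \<bullet> W = 0"
  shows "W = (W \<bullet> (\<i> * A) / (norm A)\<^sup>2) *\<^sub>R (\<i> * A)"
proof -
  have "(Re A)\<^sup>2 + (Im A)\<^sup>2 \<noteq> 0" using assms(1) by (simp add: complex_eq_iff sum_power2_eq_zero_iff)
  moreover have "Re A * Re W + Im A * Im W = 0" using assms(2) by (simp add: inner_complex_def)
  ultimately show ?thesis unfolding cmod_power2
    by (simp add: complex_eq_iff inner_complex_def field_simps power2_eq_square) algebra
qed

locale lattice_basis =
  fixes w1 w2 :: complex
  assumes basis_independent: "Im (cnj w1 * w2) \<noteq> 0"
begin

definition lattice_param :: "real \<times> real \<Rightarrow> complex" where
  "lattice_param x = of_real (fst x) * w1 + of_real (snd x) * w2"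

lemma continuous_on_lattice_param: "continuous_on S lattice_param"
  unfolding lattice_param_def by (intro continuous_intros)

lemma inner_lattice_param: "\<xi> \<bullet> lattice_param x = fst x * (\<xi> \<bullet> w1) + snd x * (\<xi> \<bullet> w2)"
  unfolding lattice_param_def by (simp add: inner_add_right scaleR_conv_of_real[symmetric])

lemma lattice_param_coords:
  "v = lattice_param (Im (cnj v * w2) / Im (cnj w1 * w2), Im (cnj w1 * v) / Im (cnj w1 * w2))"
proof -
  define d where "d = Im (cnj w1 * w2)"
  define a where "a = Im (cnj v * w2)"
  define b where "b = Im (cnj w1 * v)"
  have "d \<noteq> 0" using basis_independent d_def by simp
  have "Re v * d = a * Re w1 + b * Re w2" "Im v * d = a * Im w1 + b * Im w2"
    unfolding d_def a_def b_def by (simp_all add: algebra_simps)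
  then have "Re v = a / d * Re w1 + b / d * Re w2" "Im v = a / d * Im w1 + b / d * Im w2"
    using \<open>d \<noteq> 0\<close> by (simp_all add: field_simps)
  then have "v = of_real (a / d) * w1 + of_real (b / d) * w2"
    by (simp add: complex_eq_iff)
  then show ?thesis
    unfolding lattice_param_def a_def b_def d_def by simp
qed

lemma lattice_param_surj: "\<exists>x. z = lattice_param x"
  using lattice_param_coords by blast

lemma exists_inner_basis: "\<exists>\<xi>. \<xi> \<bullet> w1 = a \<and> \<xi> \<bullet> w2 = b"
proof -
  define d where "d = Im (cnj w1 * w2)"
  have "d \<noteq> 0" using basis_independent d_def by simp
  define \<xi> where "\<xi> = (of_real a * (- \<i> * w2) + of_real b * (\<i> * w1)) / of_real d"
  have "\<xi> \<bullet> w1 = a"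
    unfolding \<xi>_def using \<open>d \<noteq> 0\<close> d_def by (simp add: inner_complex_def field_simps, algebra)
  moreover have "\<xi> \<bullet> w2 = b"
    unfolding \<xi>_def using \<open>d \<noteq> 0\<close> d_def by (simp add: inner_complex_def field_simps, algebra)
  ultimately show ?thesis by blast
qed

lemma inner_basis_eq_0: "\<xi> \<bullet> w1 = 0 \<Longrightarrow> \<xi> \<bullet> w2 = 0 \<Longrightarrow> \<xi> = 0"
  using basis_independent by (simp add: inner_complex_def complex_eq_iff) algebra

lemma integral_derivative_periodic_eq_0:
  fixes G :: "complex \<Rightarrow> complex"
  assumes G': "\<And>z. (G has_derivative G' z) (at z)" and cont: "\<And>v. continuous_on UNIV (\<lambda>z. G' z v)"
    and per1: "\<And>z. G (z + w1) = G z" and per2: "\<And>z. G (z + w2) = G z"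
  shows "integral (cbox (0,0) (1,1)) (\<lambda>x. G' (lattice_param x) v) = 0"
proof -
  have cont_param: "continuous_on (cbox (0,0) (1,1)) (\<lambda>x. G' (lattice_param x) u)" for u
    by (rule continuous_on_compose2[OF cont continuous_on_lattice_param]) auto
  have int2: "integral (cbox (0,0) (1,1)) (\<lambda>x. G' (lattice_param x) w2) = 0"
  proof -
    have "integral {0..1} (\<lambda>t. G' (lattice_param (s, t)) w2) = 0" for s
      using integral_derivative_along_period_eq_0[OF G' per2, of "of_real s * w1"]
      by (simp add: lattice_param_def)
    then show ?thesis
      using integral_prod_continuous[OF cont_param[of w2]] by (simp add: cbox_interval)
  qed
  have int1: "integral (cbox (0,0) (1,1)) (\<lambda>x. G' (lattice_param x) w1) = 0"
  proof -
    have "integral {0..1} (\<lambda>s. G' (lattice_param (s, t)) w1) = 0" for t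
      using integral_derivative_along_period_eq_0[OF G' per1, of "of_real t * w2"]
      by (simp add: lattice_param_def add.commute)
    then show ?thesis
      using integral_prod_continuous[OF cont_param[of w1]]
        integral_swap_continuous[of "(0::real)" 0 1 1 "\<lambda>s t. G' (lattice_param (s, t)) w1"] cont_param[of w1]
      by (simp add: cbox_interval case_prod_beta')
  qed
  obtain a b where v: "v = of_real a * w1 + of_real b * w2"
    using lattice_param_coords[of v] unfolding lattice_param_def by (metis fst_conv snd_conv)
  have "G' z v = a *\<^sub>R G' z w1 + b *\<^sub>R G' z w2" for z
    using has_derivative_linear[OF G'[of z]] unfolding v
    by (simp add: linear_add linear_scale scaleR_conv_of_real[symmetric])
  moreover have "(\<lambda>x. c *\<^sub>R G' (lattice_param x) u) integrable_on cbox (0,0) (1,1)" for c u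
    by (intro integrable_cmul integrable_continuous cont_param)
  ultimately show ?thesis using int1 int2 by (simp add: integral_add)
qed

end

locale lattice = lattice_basis +
  fixes \<Gamma> :: "complex set"
  assumes lattice_eq: "\<Gamma> = {of_int m * w1 + of_int n * w2 | m n. True}"
begin

lemma basis_in_lattice: "w1 \<in> \<Gamma>" "w2 \<in> \<Gamma>"
  unfolding lattice_eq by (rule CollectI, rule exI[of _ 1], rule exI[of _ 0], simp)
    (rule CollectI, rule exI[of _ 0], rule exI[of _ 1], simp)

lemma dual_lattice_iff: "\<xi> \<in> dual_lattice \<Gamma> \<longleftrightarrow> \<xi> \<bullet> w1 \<in> \<int> \<and> \<xi> \<bullet> w2 \<in> \<int>"
proof
  assume "\<xi> \<bullet> w1 \<in> \<int> \<and> \<xi> \<bullet> w2 \<in> \<int>"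
  moreover have "\<xi> \<bullet> (of_int m * w1 + of_int n * w2) = of_int m * (\<xi> \<bullet> w1) + of_int n * (\<xi> \<bullet> w2)" for m n
  proof -
    have "complex_of_int k * w = real_of_int k *\<^sub>R w" for k w by (simp add: scaleR_conv_of_real)
    then show ?thesis by (simp add: inner_add_right)
  qed
  ultimately show "\<xi> \<in> dual_lattice \<Gamma>" unfolding dual_lattice_def lattice_eq by auto
qed (use basis_in_lattice in \<open>auto simp: dual_lattice_def\<close>)

end

section \<open>Quaternions and holomorphicity\<close>

lemma qmul_assoc: "qmul (qmul a b) c = qmul a (qmul b c)"
  by (simp add: qmul_def prod_eq_iff algebra_simps)

lemma qmul_add_left: "qmul (a + b) c = qmul a c + qmul b c"
  by (simp add: qmul_def prod_eq_iff algebra_simps)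

lemma qmul_add_right: "qmul a (b + c) = qmul a b + qmul a c"
  by (simp add: qmul_def prod_eq_iff algebra_simps)

lemma qmul_scaleR_right: "qmul a (r *\<^sub>R b) = r *\<^sub>R qmul a b"
  by (simp add: qmul_def prod_eq_iff scaleR_conv_of_real algebra_simps)

lemma qmul_zero_left: "qmul 0 a = 0" and qmul_zero_right: "qmul a 0 = 0"
  by (simp_all add: qmul_def zero_prod_def)

lemma qmul_qc_commute: "qmul (qc a) (qc b) = qmul (qc b) (qc a)"
  by (simp add: qmul_def qc_def mult.commute)

lemma bounded_linear_qmul_left: "bounded_linear (\<lambda>x. qmul x c)"
proof -
  have "(\<lambda>x. qmul x c) = (\<lambda>x. (fst x * fst c - cnj (snd c) * snd x, fst x * snd c + cnj (fst c) * snd x))"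
    by (simp add: fun_eq_iff qmul_def mult.commute)
  then show ?thesis
    by (simp only:) (intro bounded_linear_Pair bounded_linear_sub bounded_linear_add
        bounded_linear_compose[OF bounded_linear_mult_left bounded_linear_fst]
        bounded_linear_compose[OF bounded_linear_mult_right bounded_linear_snd])
qed

lemma normal_mult_normal: "qmul (normalN b z) (qmul (normalN b z) X) = - X"
  by (simp add: normalN_def qmul_def qexpj_def qc_def prod_eq_iff algebra_simps power2_eq_square[symmetric])
     (simp only: distrib_left[symmetric] of_real_power[symmetric] of_real_add[symmetric] sin_cos_squared_add2, simp)

definition qplus :: "quat \<Rightarrow> complex" where
  "qplus q = fst q + \<i> * cnj (snd q)"

definition qminus :: "quat \<Rightarrow> complex" where
  "qminus q = fst q - \<i> * cnj (snd q)"

definition quat_of_parts :: "complex \<times> complex \<Rightarrow> quat" where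
  "quat_of_parts pm = ((fst pm + snd pm) / 2, cnj ((fst pm - snd pm) / (2 * \<i>)))"

lemma qplus_quat_of_parts [simp]: "qplus (quat_of_parts (p, m)) = p"
  by (simp add: qplus_def quat_of_parts_def field_simps)

lemma qminus_quat_of_parts [simp]: "qminus (quat_of_parts (p, m)) = m"
  by (simp add: qminus_def quat_of_parts_def field_simps)

lemma qplus_zero [simp]: "qplus 0 = 0" and qminus_zero [simp]: "qminus 0 = 0"
  by (simp_all add: qplus_def qminus_def)

lemma quat_of_parts_qplus_qminus: "quat_of_parts (qplus q, qminus q) = q"
  by (simp add: qplus_def qminus_def quat_of_parts_def prod_eq_iff field_simps)

lemma quat_eqI: "qplus a = qplus b \<Longrightarrow> qminus a = qminus b \<Longrightarrow> a = b"
  by (metis quat_of_parts_qplus_qminus)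

lemma bounded_linear_qplus: "bounded_linear qplus"
  unfolding qplus_def by (intro bounded_linear_intros bounded_linear_compose[OF bounded_linear_cnj bounded_linear_snd])

lemma bounded_linear_qminus: "bounded_linear qminus"
  unfolding qminus_def by (intro bounded_linear_intros bounded_linear_compose[OF bounded_linear_cnj bounded_linear_snd])

lemma bounded_linear_quat_of_parts: "bounded_linear quat_of_parts"
  unfolding quat_of_parts_def
  by (intro bounded_linear_Pair bounded_linear_compose[OF bounded_linear_cnj]
      bounded_linear_compose[OF bounded_linear_divide] bounded_linear_add bounded_linear_sub
      bounded_linear_fst bounded_linear_snd)

lemma qplus_mult_qc: "qplus (qmul a (qc c)) = qplus a * c"
  by (simp add: qplus_def qmul_def qc_def algebra_simps)

lemma qminus_mult_qc: "qminus (qmul a (qc c)) = qminus a * c"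
  by (simp add: qminus_def qmul_def qc_def algebra_simps)

text \<open>In the parts \<open>qplus\<close>, \<open>qminus\<close> left multiplication by the normal \<open>e\<^sup>j\<^sup>\<beta> i\<close> becomes an
  anti-diagonal matrix: this is what decouples the holomorphicity equation.\<close>

lemma qplus_normal_mult: "qplus (qmul (qmul (qexpj b) (qc \<i>)) X) = \<i> * exp (\<i> * of_real b) * qminus X"
  by (simp add: qplus_def qminus_def qmul_def qexpj_def qc_def cis_conv_exp[symmetric] complex_eq_iff algebra_simps)

lemma qminus_normal_mult: "qminus (qmul (qmul (qexpj b) (qc \<i>)) X) = \<i> * exp (- (\<i> * of_real b)) * qplus X"
proof -
  have "exp (- (\<i> * of_real b)) = cis (- b)" by (simp add: cis_conv_exp)
  then show ?thesis
    by (simp add: qplus_def qminus_def qmul_def qexpj_def qc_def complex_eq_iff algebra_simps)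
qed

lemma normal_mult_iff:
  "U = qmul (normalN \<beta>0 z) X \<longleftrightarrow>
     qplus U = \<i> * exp (\<i> * of_real (betaf \<beta>0 z)) * qminus X \<and>
     qminus U = \<i> * exp (- (\<i> * of_real (betaf \<beta>0 z))) * qplus X"
  unfolding normalN_def using quat_eqI qplus_normal_mult qminus_normal_mult by metis

lemma linear_complex_expansion: "linear D \<Longrightarrow> D v = Re v *\<^sub>R D 1 + Im v *\<^sub>R D \<i>"
  by (metis complex_eq mult.commute scaleR_conv_of_real linear_add linear_scale mult.right_neutral)

lemma holoI:
  assumes D: "\<And>z. (\<alpha> has_derivative D z) (at z)"
    and "continuous_on UNIV (\<lambda>z. D z 1)" "continuous_on UNIV (\<lambda>z. D z \<i>)"
    and normal: "\<And>z. D z \<i> = qmul (normalN b z) (D z 1)"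
  shows "holo b \<alpha>"
  unfolding holo_def
proof (intro exI[of _ D] conjI allI D assms(2,3))
  fix z v
  have lin: "linear (D z)" using D has_derivative_linear by blast
  have "D z (\<i> * v) = (- Im v) *\<^sub>R D z 1 + Re v *\<^sub>R D z \<i>"
    using linear_complex_expansion[OF lin, of "\<i> * v"] by simp
  also have "\<dots> = qmul (normalN b z) (Re v *\<^sub>R D z 1 + Im v *\<^sub>R D z \<i>)"
    by (simp add: normal qmul_add_right qmul_scaleR_right normal_mult_normal)
  also have "Re v *\<^sub>R D z 1 + Im v *\<^sub>R D z \<i> = D z v"
    by (rule linear_complex_expansion[OF lin, symmetric])
  finally show "D z (\<i> * v) = qmul (normalN b z) (D z v)" .
qed

lemma holoE:
  assumes "holo b \<alpha>"
  obtains D where "\<And>z. (\<alpha> has_derivative D z) (at z)" "\<And>v. continuous_on UNIV (\<lambda>z. D z v)"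
    "\<And>z. D z \<i> = qmul (normalN b z) (D z 1)"
proof -
  from assms obtain D where D: "\<And>z. (\<alpha> has_derivative D z) (at z)"
    "continuous_on UNIV (\<lambda>z. D z 1)" "continuous_on UNIV (\<lambda>z. D z \<i>)"
    "\<And>z v. D z (\<i> * v) = qmul (normalN b z) (D z v)"
    unfolding holo_def by blast
  have "(\<lambda>z. D z v) = (\<lambda>z. Re v *\<^sub>R D z 1 + Im v *\<^sub>R D z \<i>)" for v
    using linear_complex_expansion has_derivative_linear[OF D(1)] by blast
  then have "continuous_on UNIV (\<lambda>z. D z v)" for v
    by (simp only:) (intro continuous_intros D(2,3))
  moreover have "D z \<i> = qmul (normalN b z) (D z 1)" for z
    using D(4)[of z 1] by simp
  ultimately show ?thesis using that D(1) by blast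
qed

lemma holo_zero: "holo b (\<lambda>z. 0)"
  by (rule holoI[of _ "\<lambda>z v. 0"]) (simp_all add: qmul_zero_right)

lemma holo_add:
  assumes "holo b \<alpha>" "holo b \<alpha>'"
  shows "holo b (\<lambda>z. \<alpha> z + \<alpha>' z)"
proof -
  obtain D where D: "\<And>z. (\<alpha> has_derivative D z) (at z)" "\<And>v. continuous_on UNIV (\<lambda>z. D z v)"
    "\<And>z. D z \<i> = qmul (normalN b z) (D z 1)"
    using holoE[OF assms(1)] by blast
  obtain D' where D': "\<And>z. (\<alpha>' has_derivative D' z) (at z)" "\<And>v. continuous_on UNIV (\<lambda>z. D' z v)"
    "\<And>z. D' z \<i> = qmul (normalN b z) (D' z 1)"
    using holoE[OF assms(2)] by blast
  show ?thesis
  proof (rule holoI)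
    show "((\<lambda>z. \<alpha> z + \<alpha>' z) has_derivative (\<lambda>v. D z v + D' z v)) (at z)" for z
      by (rule has_derivative_add[OF D(1) D'(1)])
    show "continuous_on UNIV (\<lambda>z. D z 1 + D' z 1)" "continuous_on UNIV (\<lambda>z. D z \<i> + D' z \<i>)"
      by (intro continuous_intros D(2) D'(2))+
    show "D z \<i> + D' z \<i> = qmul (normalN b z) (D z 1 + D' z 1)" for z
      by (simp add: D(3) D'(3) qmul_add_right)
  qed
qed

lemma holo_rscale:
  assumes "holo b \<alpha>"
  shows "holo b (rscale c \<alpha>)"
proof -
  obtain D where D: "\<And>z. (\<alpha> has_derivative D z) (at z)" "\<And>v. continuous_on UNIV (\<lambda>z. D z v)"
    "\<And>z. D z \<i> = qmul (normalN b z) (D z 1)"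
    using holoE[OF assms] by blast
  show ?thesis
    unfolding rscale_def
  proof (rule holoI)
    show "((\<lambda>z. qmul (\<alpha> z) (qc c)) has_derivative (\<lambda>v. qmul (D z v) (qc c))) (at z)" for z
      by (rule bounded_linear.has_derivative[OF bounded_linear_qmul_left D(1)])
    have "continuous_on UNIV (\<lambda>z. qmul (D z v) (qc c))" for v
      by (rule continuous_on_compose2[OF linear_continuous_on[OF bounded_linear_qmul_left] D(2)]) auto
    then show "continuous_on UNIV (\<lambda>z. qmul (D z 1) (qc c))" "continuous_on UNIV (\<lambda>z. qmul (D z \<i>) (qc c))"
      by blast+
    show "qmul (D z \<i>) (qc c) = qmul (normalN b z) (qmul (D z 1) (qc c))" for z
      by (simp add: D(3) qmul_assoc)
  qed
qed

lemma H0_subspace: "module.subspace rscale (H0 \<Gamma> \<beta>0 h)"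
proof -
  interpret vector_space rscale by (rule vector_space_rscale)
  show ?thesis
  proof (rule subspaceI)
    show "0 \<in> H0 \<Gamma> \<beta>0 h"
      using holo_zero by (simp add: H0_def zero_fun_def qmul_zero_left)
    show "\<alpha> + \<alpha>' \<in> H0 \<Gamma> \<beta>0 h" if "\<alpha> \<in> H0 \<Gamma> \<beta>0 h" "\<alpha>' \<in> H0 \<Gamma> \<beta>0 h" for \<alpha> \<alpha>'
      using that holo_add by (simp add: H0_def plus_fun_def qmul_add_left)
    show "rscale c \<alpha> \<in> H0 \<Gamma> \<beta>0 h" if "\<alpha> \<in> H0 \<Gamma> \<beta>0 h" for c \<alpha>
      using that holo_rscale by (simp add: H0_def rscale_def qmul_assoc qmul_qc_commute)
  qed
qed

section \<open>The coupled linear system\<close>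

lemma coupled_system_trivial:
  fixes e1 e2 f1 f2 X Y :: complex
  assumes h1: "e2 * X = \<i> * (f1 * Y)" and h2: "f2 * Y = \<i> * (e1 * X)"
    and det: "e1 * f1 + e2 * f2 \<noteq> 0"
  shows "X = 0 \<and> Y = 0"
proof -
  have "(e1 * f1 + e2 * f2) * X = 0"
  proof -
    have "e2 * f2 * X = f2 * (e2 * X)" by (simp add: mult_ac)
    also have "\<dots> = \<i> * f1 * (f2 * Y)" unfolding h1 by (simp add: mult_ac)
    also have "\<dots> = - e1 * f1 * X" unfolding h2 by (simp add: mult_ac)
    finally show ?thesis by (simp add: algebra_simps)
  qed
  moreover have "(e1 * f1 + e2 * f2) * Y = 0"
  proof -
    have "e2 * f2 * Y = e2 * (f2 * Y)" by (simp add: mult_ac)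
    also have "\<dots> = \<i> * e1 * (e2 * X)" unfolding h2 by (simp add: mult_ac)
    also have "\<dots> = - e1 * f1 * Y" unfolding h1 by (simp add: mult_ac)
    finally show ?thesis by (simp add: algebra_simps)
  qed
  ultimately show ?thesis using det by simp
qed

text \<open>The case split avoids returning the zero vector when \<open>f1 = e2 = 0\<close>.\<close>

definition kernel_fst :: "complex \<Rightarrow> complex \<Rightarrow> complex \<Rightarrow> complex \<Rightarrow> complex" where
  "kernel_fst e1 e2 f1 f2 = (if f1 \<noteq> 0 \<or> e2 \<noteq> 0 then \<i> * f1 else f2)"

definition kernel_snd :: "complex \<Rightarrow> complex \<Rightarrow> complex \<Rightarrow> complex \<Rightarrow> complex" where
  "kernel_snd e1 e2 f1 f2 = (if f1 \<noteq> 0 \<or> e2 \<noteq> 0 then e2 else \<i> * e1)"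

lemma coupled_system_kernel:
  fixes e1 e2 f1 f2 :: complex
  assumes "e1 * f1 + e2 * f2 = 0"
  shows "e2 * kernel_fst e1 e2 f1 f2 = \<i> * (f1 * kernel_snd e1 e2 f1 f2)"
    and "f2 * kernel_snd e1 e2 f1 f2 = \<i> * (e1 * kernel_fst e1 e2 f1 f2)"
proof -
  have "f2 * e2 = - (e1 * f1)" using assms by (simp add: algebra_simps add_eq_0_iff)
  then show "e2 * kernel_fst e1 e2 f1 f2 = \<i> * (f1 * kernel_snd e1 e2 f1 f2)"
    "f2 * kernel_snd e1 e2 f1 f2 = \<i> * (e1 * kernel_fst e1 e2 f1 f2)"
    unfolding kernel_fst_def kernel_snd_def using assms by (auto simp: algebra_simps)
qed

lemma kernel_nonzero:
  "e1 \<noteq> 0 \<or> e2 \<noteq> 0 \<Longrightarrow> f1 \<noteq> 0 \<or> f2 \<noteq> 0 \<Longrightarrow> kernel_fst e1 e2 f1 f2 \<noteq> 0 \<or> kernel_snd e1 e2 f1 f2 \<noteq> 0"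
  unfolding kernel_fst_def kernel_snd_def by auto

lemma coupled_system_solutions:
  fixes e1 e2 f1 f2 X Y :: complex
  assumes h1: "e2 * X = \<i> * (f1 * Y)" and h2: "f2 * Y = \<i> * (e1 * X)"
    and "e1 \<noteq> 0 \<or> e2 \<noteq> 0" "f1 \<noteq> 0 \<or> f2 \<noteq> 0"
  shows "\<exists>c. X = c * kernel_fst e1 e2 f1 f2 \<and> Y = c * kernel_snd e1 e2 f1 f2"
proof (cases "e2 \<noteq> 0")
  case True
  then have "X = Y / e2 * (\<i> * f1)" using h1 by (simp add: field_simps)
  then show ?thesis using True unfolding kernel_fst_def kernel_snd_def by (intro exI[of _ "Y / e2"]) simp
next
  case False
  show ?thesis
  proof (cases "f1 \<noteq> 0")
    case True
    then have "Y = 0" using h1 False by simp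
    then show ?thesis using True False unfolding kernel_fst_def kernel_snd_def
      by (intro exI[of _ "X / (\<i> * f1)"]) simp
  next
    case f1: False
    then have "e1 \<noteq> 0" "f2 \<noteq> 0" using False assms(3,4) by auto
    then have "Y = X / f2 * (\<i> * e1)" using h2 by (simp add: field_simps)
    then show ?thesis using False f1 \<open>f2 \<noteq> 0\<close> unfolding kernel_fst_def kernel_snd_def
      by (intro exI[of _ "X / f2"]) simp
  qed
qed

section \<open>Fourier coefficients of holomorphic sections\<close>

locale multiplier = lattice +
  fixes \<beta>0 A B :: complex
  assumes beta_dual: "\<beta>0 \<in> dual_lattice \<Gamma>" and A_nonzero: "A \<noteq> 0"
begin

text \<open>\<open>exp (expo C z)\<close> has multiplier \<open>hAB A B\<close> exactly when \<open>C \<in> B + \<Gamma>\<^sup>*\<close>, the set \<open>freqs\<close>.\<close>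

definition expo :: "complex \<Rightarrow> complex \<Rightarrow> complex" where
  "expo C z = 2 * of_real pi * (of_real (A \<bullet> z) - \<i> * of_real (C \<bullet> z))"

definition freqs :: "complex set" where
  "freqs = {C. C - B \<in> dual_lattice \<Gamma>}"

definition quasi_periodic :: "(complex \<Rightarrow> complex) \<Rightarrow> bool" where
  "quasi_periodic w \<longleftrightarrow> (\<forall>\<gamma>\<in>\<Gamma>. \<forall>z. w (z + \<gamma>) = w z * hAB A B \<gamma>)"

definition fourier_coeff :: "(complex \<Rightarrow> complex) \<Rightarrow> complex \<Rightarrow> complex" where
  "fourier_coeff w C =
     integral (cbox (0,0) (1,1)) (\<lambda>x. w (lattice_param x) * exp (- expo C (lattice_param x)))"

lemma bounded_linear_expo: "bounded_linear (expo C)"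
  unfolding expo_def
  by (intro bounded_linear_intros bounded_linear_compose[OF bounded_linear_of_real bounded_linear_inner_right])

lemma continuous_on_exp_expo: "continuous_on S (\<lambda>z. exp (expo C z))"
  by (intro continuous_intros linear_continuous_on[OF bounded_linear_expo])

lemma exp_expo_add_beta: "exp (expo (C + \<beta>0) z) = exp (expo C z) * exp (- (\<i> * of_real (betaf \<beta>0 z)))"
  unfolding betaf_def expo_def by (simp add: exp_add[symmetric] inner_add_left algebra_simps)

lemma exp_neg_expo_add_beta: "exp (- expo (C + \<beta>0) z) = exp (- expo C z) * exp (\<i> * of_real (betaf \<beta>0 z))"
  unfolding betaf_def expo_def by (simp add: exp_add[symmetric] inner_add_left algebra_simps)

lemma freqs_add_dual: "C \<in> freqs \<Longrightarrow> \<xi> \<in> dual_lattice \<Gamma> \<Longrightarrow> C + \<xi> \<in> freqs"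
  using dual_lattice_add[of "C - B" \<Gamma> \<xi>] unfolding freqs_def by (simp add: algebra_simps)

lemma freqs_diff_dual: "C \<in> freqs \<Longrightarrow> \<xi> \<in> dual_lattice \<Gamma> \<Longrightarrow> C - \<xi> \<in> freqs"
  using dual_lattice_diff[of "C - B" \<Gamma> \<xi>] unfolding freqs_def by (simp add: algebra_simps)

lemma freqs_diff: "C \<in> freqs \<Longrightarrow> C' \<in> freqs \<Longrightarrow> C - C' \<in> dual_lattice \<Gamma>"
  using dual_lattice_diff[of "C - B" \<Gamma> "C' - B"] unfolding freqs_def by simp

lemma exp_expo_lattice:
  assumes "C \<in> freqs" "\<gamma> \<in> \<Gamma>"
  shows "exp (expo C \<gamma>) = hAB A B \<gamma>"
proof -
  have "(C - B) \<bullet> \<gamma> \<in> \<int>" using assms unfolding freqs_def dual_lattice_def by blast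
  from exp_integer_2pi[OF this] have "exp (2 * of_real pi * \<i> * of_real ((C - B) \<bullet> \<gamma>)) = 1"
    by (simp add: mult_ac)
  moreover have "expo C \<gamma> = 2 * of_real pi * (of_real (A \<bullet> \<gamma>) - \<i> * of_real (B \<bullet> \<gamma>))
      - 2 * of_real pi * \<i> * of_real ((C - B) \<bullet> \<gamma>)"
    unfolding expo_def by (simp add: inner_diff_left algebra_simps)
  ultimately show ?thesis unfolding hAB_def by (simp add: exp_diff)
qed

lemma expo_add: "expo C (z + z') = expo C z + expo C z'"
  unfolding expo_def by (simp add: inner_add_right algebra_simps)

lemma integrable_fourier_coeff:
  "continuous_on UNIV w \<Longrightarrow>
     (\<lambda>x. w (lattice_param x) * exp (- expo C (lattice_param x))) integrable_on cbox (0,0) (1,1)"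
  by (intro integrable_continuous continuous_intros continuous_on_compose2[OF _ continuous_on_lattice_param]
      continuous_on_compose2[OF linear_continuous_on[OF bounded_linear_expo] continuous_on_lattice_param]) auto

lemma fourier_coeff_cmult: "fourier_coeff (\<lambda>z. c * w z) C = c * fourier_coeff w C"
  unfolding fourier_coeff_def by (simp add: mult.assoc)

lemma fourier_coeff_diff:
  "continuous_on UNIV u \<Longrightarrow> continuous_on UNIV v \<Longrightarrow>
     fourier_coeff (\<lambda>z. u z - v z) C = fourier_coeff u C - fourier_coeff v C"
  unfolding fourier_coeff_def
  by (simp add: left_diff_distrib integral_diff[OF integrable_fourier_coeff integrable_fourier_coeff])

lemma fourier_coeff_sum:
  "finite I \<Longrightarrow> (\<And>i. i \<in> I \<Longrightarrow> continuous_on UNIV (w i)) \<Longrightarrow>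
     fourier_coeff (\<lambda>z. \<Sum>i\<in>I. w i z) C = (\<Sum>i\<in>I. fourier_coeff (w i) C)"
  unfolding fourier_coeff_def sum_distrib_right
  by (rule integral_sum) (auto intro: integrable_fourier_coeff)

lemma fourier_coeff_exp_expo:
  assumes "C \<in> freqs" "C' \<in> freqs"
  shows "fourier_coeff (\<lambda>z. exp (expo C z)) C' = (if C' = C then 1 else 0)"
proof -
  have "C - C' \<in> dual_lattice \<Gamma>" using freqs_diff[OF assms] .
  then obtain m n where m: "(C - C') \<bullet> w1 = of_int m" and n: "(C - C') \<bullet> w2 = of_int n"
    unfolding dual_lattice_iff by (auto elim!: Ints_cases)
  have "exp (expo C (lattice_param x)) * exp (- expo C' (lattice_param x)) = torus_char (-m) (-n) x" for x
  proof -
    have "exp (expo C z) * exp (- expo C' z) = exp (- (2 * of_real pi * \<i> * of_real ((C - C') \<bullet> z)))" for z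
      unfolding exp_add[symmetric] expo_def by (simp add: inner_diff_left algebra_simps)
    moreover have "(C - C') \<bullet> lattice_param x = of_int m * fst x + of_int n * snd x"
      unfolding inner_lattice_param m n by simp
    ultimately show ?thesis
      unfolding torus_char_def by (simp add: algebra_simps)
  qed
  then have "fourier_coeff (\<lambda>z. exp (expo C z)) C' = integral (cbox (0,0) (1,1)) (torus_char (-m) (-n))"
    unfolding fourier_coeff_def by simp
  also have "\<dots> = (if C' = C then 1 else 0)"
    using inner_basis_eq_0[of "C - C'"] m n by (auto simp: integral_torus_char)
  finally show ?thesis .
qed

lemma quasi_periodic_fourier_uniqueness:
  assumes cont: "continuous_on UNIV w" and qp: "quasi_periodic w"
    and coeffs: "\<And>C. C \<in> freqs \<Longrightarrow> fourier_coeff w C = 0"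
  shows "w z = 0"
proof -
  define F where "F x = w (lattice_param x) * exp (- expo B (lattice_param x))" for x
  have cont_F: "continuous_on UNIV F"
    unfolding F_def
    by (intro continuous_intros continuous_on_compose2[OF cont continuous_on_lattice_param]
        continuous_on_compose2[OF linear_continuous_on[OF bounded_linear_expo] continuous_on_lattice_param]) auto
  have shift: "F x = F y" if "lattice_param y = lattice_param x + \<gamma>" "\<gamma> \<in> \<Gamma>" for x y \<gamma>
  proof -
    have "B \<in> freqs" unfolding freqs_def dual_lattice_def by simp
    then show ?thesis
      using qp that exp_expo_lattice[of B \<gamma>] unfolding F_def quasi_periodic_def
      by (simp add: expo_add exp_diff hAB_def)
  qed
  have per: "F (s + 1, t) = F (s, t)" "F (s, t + 1) = F (s, t)" for s t
    by (rule sym, rule shift[OF _ basis_in_lattice(1)], simp add: lattice_param_def algebra_simps)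
       (rule sym, rule shift[OF _ basis_in_lattice(2)], simp add: lattice_param_def algebra_simps)
  have coeffs_F: "integral (cbox (0,0) (1,1)) (\<lambda>x. F x * torus_char m n x) = 0" for m n
  proof -
    obtain \<xi> where \<xi>: "\<xi> \<bullet> w1 = of_int m" "\<xi> \<bullet> w2 = of_int n" using exists_inner_basis by blast
    then have "B + \<xi> \<in> freqs" unfolding freqs_def dual_lattice_iff by simp
    moreover have "F x * torus_char m n x = w (lattice_param x) * exp (- expo (B + \<xi>) (lattice_param x))" for x
      unfolding F_def torus_char_def expo_def mult.assoc exp_add[symmetric]
      by (simp add: inner_add_left inner_lattice_param \<xi> algebra_simps)
    ultimately show ?thesis using coeffs unfolding fourier_coeff_def by simp
  qed
  have "F x = 0" for x by (rule torus_fourier_uniqueness[OF cont_F per coeffs_F])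
  moreover obtain x where "z = lattice_param x" using lattice_param_surj by blast
  ultimately show ?thesis unfolding F_def by simp
qed

lemma fourier_coeff_derivative:
  fixes w :: "complex \<Rightarrow> complex"
  assumes w': "\<And>z. (w has_derivative w' z) (at z)" and cont': "\<And>v. continuous_on UNIV (\<lambda>z. w' z v)"
    and qp: "quasi_periodic w" and C: "C \<in> freqs"
  shows "integral (cbox (0,0) (1,1)) (\<lambda>x. w' (lattice_param x) v * exp (- expo C (lattice_param x)))
    = expo C v * fourier_coeff w C"
proof -
  define G where "G z = w z * exp (- expo C z)" for z
  define G' where "G' z v = w z * (exp (- expo C z) * - expo C v) + w' z v * exp (- expo C z)" for z v
  have cont: "continuous_on UNIV w"
    using w' by (meson continuous_at_imp_continuous_on has_derivative_continuous)
  have G': "(G has_derivative G' z) (at z)" for z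
    unfolding G_def G'_def
    using has_derivative_exp_bounded_linear[OF bounded_linear_minus[OF bounded_linear_expo]]
    by (intro has_derivative_mult w') (simp add: mult_ac)
  have cont_G': "continuous_on UNIV (\<lambda>z. G' z v)" for v
    unfolding G'_def by (intro continuous_intros cont cont' continuous_on_exp_expo[of _ C, unfolded exp_minus]
        linear_continuous_on[OF bounded_linear_expo])
  have per: "G (z + \<gamma>) = G z" if "\<gamma> \<in> \<Gamma>" for z \<gamma>
    using qp that exp_expo_lattice[OF C that] unfolding G_def quasi_periodic_def
    by (simp add: expo_add exp_diff hAB_def)
  have "0 = integral (cbox (0,0) (1,1)) (\<lambda>x. G' (lattice_param x) v)"
    using integral_derivative_periodic_eq_0[OF G' cont_G' per per] basis_in_lattice by simp
  also have "\<dots> =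
      integral (cbox (0,0) (1,1)) (\<lambda>x. w' (lattice_param x) v * exp (- expo C (lattice_param x)))
      - expo C v * fourier_coeff w C"
    unfolding G'_def fourier_coeff_def
    using integral_diff[OF integrable_fourier_coeff[OF cont'] integrable_on_mult_right[OF integrable_fourier_coeff[OF cont]]]
    by (simp add: algebra_simps)
  finally show ?thesis by simp
qed

lemma fourier_coeff_relation:
  assumes u': "\<And>z. (u has_derivative u' z) (at z)" "\<And>v. continuous_on UNIV (\<lambda>z. u' z v)" "quasi_periodic u"
    and v': "\<And>z. (v has_derivative v' z) (at z)" "\<And>w. continuous_on UNIV (\<lambda>z. v' z w)" "quasi_periodic v"
    and C: "C \<in> freqs" "C' \<in> freqs"
    and eq: "\<And>z. u' z \<i> * exp (- expo C z) = c * (v' z 1 * exp (- expo C' z))"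
  shows "expo C \<i> * fourier_coeff u C = c * (expo C' 1 * fourier_coeff v C')"
proof -
  have "expo C \<i> * fourier_coeff u C =
      integral (cbox (0,0) (1,1)) (\<lambda>x. u' (lattice_param x) \<i> * exp (- expo C (lattice_param x)))"
    by (rule fourier_coeff_derivative[OF u' C(1), symmetric])
  also have "\<dots> = integral (cbox (0,0) (1,1)) (\<lambda>x. c * (v' (lattice_param x) 1 * exp (- expo C' (lattice_param x))))"
    by (simp only: eq)
  also have "\<dots> = c * (expo C' 1 * fourier_coeff v C')"
    using fourier_coeff_derivative[OF v' C(2), of 1] by simp
  finally show ?thesis .
qed

lemma H0_parts:
  assumes "\<alpha> \<in> H0 \<Gamma> \<beta>0 (hAB A B)"
  obtains D where "\<And>z. (\<alpha> has_derivative D z) (at z)" "\<And>v. continuous_on UNIV (\<lambda>z. D z v)"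
    "\<And>z. qplus (D z \<i>) = \<i> * exp (\<i> * of_real (betaf \<beta>0 z)) * qminus (D z 1)"
    "\<And>z. qminus (D z \<i>) = \<i> * exp (- (\<i> * of_real (betaf \<beta>0 z))) * qplus (D z 1)"
    "quasi_periodic (\<lambda>z. qplus (\<alpha> z))" "quasi_periodic (\<lambda>z. qminus (\<alpha> z))"
proof -
  from assms have "holo \<beta>0 \<alpha>" and qp: "\<forall>\<gamma>\<in>\<Gamma>. \<forall>z. \<alpha> (z + \<gamma>) = qmul (\<alpha> z) (qc (hAB A B \<gamma>))"
    unfolding H0_def by auto
  from \<open>holo \<beta>0 \<alpha>\<close> obtain D where "\<And>z. (\<alpha> has_derivative D z) (at z)"
    "\<And>v. continuous_on UNIV (\<lambda>z. D z v)" "\<And>z. D z \<i> = qmul (normalN \<beta>0 z) (D z 1)"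
    by (rule holoE) blast
  moreover have "quasi_periodic (\<lambda>z. qplus (\<alpha> z))" "quasi_periodic (\<lambda>z. qminus (\<alpha> z))"
    using qp unfolding quasi_periodic_def by (simp_all add: qplus_mult_qc qminus_mult_qc)
  ultimately show ?thesis using that unfolding normal_mult_iff by blast
qed

lemma H0_coeff_equations:
  assumes \<alpha>: "\<alpha> \<in> H0 \<Gamma> \<beta>0 (hAB A B)" and C: "C \<in> freqs"
  shows "expo C \<i> * fourier_coeff (\<lambda>z. qplus (\<alpha> z)) C =
      \<i> * (expo (C + \<beta>0) 1 * fourier_coeff (\<lambda>z. qminus (\<alpha> z)) (C + \<beta>0))"
    and "expo (C + \<beta>0) \<i> * fourier_coeff (\<lambda>z. qminus (\<alpha> z)) (C + \<beta>0) =
      \<i> * (expo C 1 * fourier_coeff (\<lambda>z. qplus (\<alpha> z)) C)"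
proof -
  obtain D where D: "\<And>z. (\<alpha> has_derivative D z) (at z)" "\<And>v. continuous_on UNIV (\<lambda>z. D z v)"
    and plus: "\<And>z. qplus (D z \<i>) = \<i> * exp (\<i> * of_real (betaf \<beta>0 z)) * qminus (D z 1)"
    and minus: "\<And>z. qminus (D z \<i>) = \<i> * exp (- (\<i> * of_real (betaf \<beta>0 z))) * qplus (D z 1)"
    and qp: "quasi_periodic (\<lambda>z. qplus (\<alpha> z))" "quasi_periodic (\<lambda>z. qminus (\<alpha> z))"
    using H0_parts[OF \<alpha>] by blast
  have P: "\<And>z. ((\<lambda>z. qplus (\<alpha> z)) has_derivative (\<lambda>v. qplus (D z v))) (at z)"
    "\<And>v. continuous_on UNIV (\<lambda>z. qplus (D z v))"
    by (rule bounded_linear.has_derivative[OF bounded_linear_qplus D(1)],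
        rule continuous_on_compose2[OF linear_continuous_on[OF bounded_linear_qplus] D(2)], auto)
  have M: "\<And>z. ((\<lambda>z. qminus (\<alpha> z)) has_derivative (\<lambda>v. qminus (D z v))) (at z)"
    "\<And>v. continuous_on UNIV (\<lambda>z. qminus (D z v))"
    by (rule bounded_linear.has_derivative[OF bounded_linear_qminus D(1)],
        rule continuous_on_compose2[OF linear_continuous_on[OF bounded_linear_qminus] D(2)], auto)
  have C': "C + \<beta>0 \<in> freqs" using freqs_add_dual[OF C beta_dual] .
  show "expo C \<i> * fourier_coeff (\<lambda>z. qplus (\<alpha> z)) C =
      \<i> * (expo (C + \<beta>0) 1 * fourier_coeff (\<lambda>z. qminus (\<alpha> z)) (C + \<beta>0))"
    by (rule fourier_coeff_relation[OF P qp(1) M qp(2) C C'])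
       (simp add: plus exp_neg_expo_add_beta mult_ac)
  show "expo (C + \<beta>0) \<i> * fourier_coeff (\<lambda>z. qminus (\<alpha> z)) (C + \<beta>0) =
      \<i> * (expo C 1 * fourier_coeff (\<lambda>z. qplus (\<alpha> z)) C)"
    by (rule fourier_coeff_relation[OF M qp(2) P qp(1) C' C])
       (simp add: minus exp_neg_expo_add_beta exp_expo_add_beta exp_minus field_simps)
qed

section \<open>Admissible frequencies\<close>

definition admissible :: "complex \<Rightarrow> bool" where
  "admissible C \<longleftrightarrow> A \<bullet> (2 *\<^sub>R C + \<beta>0) = 0 \<and> (norm A)\<^sup>2 = C \<bullet> (C + \<beta>0)"

lemma coupled_det_eq_0_iff:
  "expo C 1 * expo (C + \<beta>0) 1 + expo C \<i> * expo (C + \<beta>0) \<i> = 0 \<longleftrightarrow> admissible C"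
proof -
  have "expo C 1 * expo (C + \<beta>0) 1 + expo C \<i> * expo (C + \<beta>0) \<i> =
      4 * of_real (pi\<^sup>2) * (of_real ((norm A)\<^sup>2 - C \<bullet> (C + \<beta>0)) - \<i> * of_real (A \<bullet> (2 *\<^sub>R C + \<beta>0)))"
    unfolding expo_def cmod_power2
    by (simp add: complex_eq_iff inner_complex_def power2_eq_square algebra_simps)
  then show ?thesis unfolding admissible_def by (auto simp: complex_eq_iff)
qed

lemma expo_nonzero: "expo C 1 \<noteq> 0 \<or> expo C \<i> \<noteq> 0"
  using A_nonzero unfolding expo_def by (auto simp: complex_eq_iff inner_complex_def)

definition kernel_plus :: "complex \<Rightarrow> complex" where
  "kernel_plus C = kernel_fst (expo C 1) (expo C \<i>) (expo (C + \<beta>0) 1) (expo (C + \<beta>0) \<i>)"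

definition kernel_minus :: "complex \<Rightarrow> complex" where
  "kernel_minus C = kernel_snd (expo C 1) (expo C \<i>) (expo (C + \<beta>0) 1) (expo (C + \<beta>0) \<i>)"

lemma kernel_plus_minus_nonzero: "kernel_plus C \<noteq> 0 \<or> kernel_minus C \<noteq> 0"
  unfolding kernel_plus_def kernel_minus_def by (rule kernel_nonzero[OF expo_nonzero expo_nonzero])

lemma kernel_equations:
  assumes "admissible C"
  shows "expo C \<i> * kernel_plus C = \<i> * (expo (C + \<beta>0) 1 * kernel_minus C)"
    and "expo (C + \<beta>0) \<i> * kernel_minus C = \<i> * (expo C 1 * kernel_plus C)"
  using coupled_system_kernel coupled_det_eq_0_iff assms
  unfolding kernel_plus_def kernel_minus_def by blast+

lemma H0_coeffs_not_admissible:
  assumes "\<alpha> \<in> H0 \<Gamma> \<beta>0 (hAB A B)" "C \<in> freqs" "\<not> admissible C"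
  shows "fourier_coeff (\<lambda>z. qplus (\<alpha> z)) C = 0 \<and> fourier_coeff (\<lambda>z. qminus (\<alpha> z)) (C + \<beta>0) = 0"
  using coupled_system_trivial[OF H0_coeff_equations[OF assms(1,2)]] coupled_det_eq_0_iff assms(3) by blast

lemma H0_coeffs_admissible:
  assumes "\<alpha> \<in> H0 \<Gamma> \<beta>0 (hAB A B)" "C \<in> freqs"
  shows "\<exists>c. fourier_coeff (\<lambda>z. qplus (\<alpha> z)) C = c * kernel_plus C \<and>
    fourier_coeff (\<lambda>z. qminus (\<alpha> z)) (C + \<beta>0) = c * kernel_minus C"
  unfolding kernel_plus_def kernel_minus_def
  by (rule coupled_system_solutions[OF H0_coeff_equations[OF assms] expo_nonzero expo_nonzero])

definition exp_section :: "complex \<Rightarrow> complex \<Rightarrow> quat" where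
  "exp_section C z = quat_of_parts (kernel_plus C * exp (expo C z), kernel_minus C * exp (expo (C + \<beta>0) z))"

lemma qplus_exp_section: "qplus (exp_section C z) = kernel_plus C * exp (expo C z)"
  and qminus_exp_section: "qminus (exp_section C z) = kernel_minus C * exp (expo (C + \<beta>0) z)"
  unfolding exp_section_def by simp_all

lemma exp_section_in_H0:
  assumes C: "C \<in> freqs" and adm: "admissible C"
  shows "exp_section C \<in> H0 \<Gamma> \<beta>0 (hAB A B)"
proof -
  define D where "D z v = quat_of_parts (kernel_plus C * (exp (expo C z) * expo C v),
      kernel_minus C * (exp (expo (C + \<beta>0) z) * expo (C + \<beta>0) v))" for z v
  have "(exp_section C has_derivative D z) (at z)" for z
    unfolding exp_section_def D_def
    by (intro bounded_linear.has_derivative[OF bounded_linear_quat_of_parts] has_derivative_Pair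
        has_derivative_mult_right has_derivative_exp_bounded_linear bounded_linear_expo)
  moreover have "continuous_on UNIV (\<lambda>z. D z v)" for v
    unfolding D_def
    by (intro continuous_on_compose2[OF linear_continuous_on[OF bounded_linear_quat_of_parts]]
        continuous_intros continuous_on_exp_expo) auto
  moreover have "D z \<i> = qmul (normalN \<beta>0 z) (D z 1)" for z
    unfolding normal_mult_iff D_def qplus_quat_of_parts qminus_quat_of_parts
    using kernel_equations[OF adm] exp_expo_add_beta[of C z]
    by (auto simp: exp_minus field_simps)
  ultimately have "holo \<beta>0 (exp_section C)" by (intro holoI) auto
  moreover have "exp_section C (z + \<gamma>) = qmul (exp_section C z) (qc (hAB A B \<gamma>))" if "\<gamma> \<in> \<Gamma>" for z \<gamma>
    using exp_expo_lattice[OF C that] exp_expo_lattice[OF freqs_add_dual[OF C beta_dual] that]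
    by (intro quat_eqI)
       (simp_all add: qplus_mult_qc qminus_mult_qc qplus_exp_section qminus_exp_section expo_add exp_add mult_ac)
  ultimately show ?thesis unfolding H0_def by blast
qed

lemma fourier_coeff_qplus_exp_section:
  "C \<in> freqs \<Longrightarrow> C' \<in> freqs \<Longrightarrow>
     fourier_coeff (\<lambda>z. qplus (exp_section C z)) C' = (if C' = C then kernel_plus C else 0)"
  by (simp add: qplus_exp_section fourier_coeff_cmult fourier_coeff_exp_expo)

lemma fourier_coeff_qminus_exp_section:
  "C \<in> freqs \<Longrightarrow> C' \<in> freqs \<Longrightarrow>
     fourier_coeff (\<lambda>z. qminus (exp_section C z)) C' = (if C' = C + \<beta>0 then kernel_minus C else 0)"
  by (simp add: qminus_exp_section fourier_coeff_cmult fourier_coeff_exp_expo freqs_add_dual beta_dual)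

text \<open>With \<open>C = (W - \<beta>0) / 2\<close>, admissibility says \<open>W \<bottom> A\<close> and \<open>|W|\<^sup>2 = 4|A|\<^sup>2 + |\<beta>0|\<^sup>2\<close>,
  so \<open>W = \<plusminus>adm_scale \<i>A\<close>: there are exactly two admissible frequencies.\<close>

definition adm_scale :: real where
  "adm_scale = sqrt (4 * (norm A)\<^sup>2 + (norm \<beta>0)\<^sup>2) / norm A"

definition C_plus :: complex where
  "C_plus = (1/2) *\<^sub>R (adm_scale *\<^sub>R (\<i> * A) - \<beta>0)"

definition C_minus :: complex where
  "C_minus = (1/2) *\<^sub>R ((- adm_scale) *\<^sub>R (\<i> * A) - \<beta>0)"

lemma adm_scale_pos: "adm_scale > 0"
  unfolding adm_scale_def using A_nonzero by (simp add: add_pos_nonneg)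

lemma adm_scale_sq: "adm_scale\<^sup>2 * (norm A)\<^sup>2 = 4 * (norm A)\<^sup>2 + (norm \<beta>0)\<^sup>2"
  unfolding adm_scale_def using A_nonzero by (simp add: power_divide add_nonneg_nonneg)

lemma admissible_half_iff:
  "admissible ((1/2) *\<^sub>R (W - \<beta>0)) \<longleftrightarrow> A \<bullet> W = 0 \<and> (norm W)\<^sup>2 = 4 * (norm A)\<^sup>2 + (norm \<beta>0)\<^sup>2"
proof -
  have "2 *\<^sub>R ((1/2) *\<^sub>R (W - \<beta>0)) + \<beta>0 = W" by (simp add: algebra_simps)
  then show ?thesis unfolding admissible_def inner_half_diff_half_add by auto
qed

lemma admissible_iff: "admissible C \<longleftrightarrow> C = C_plus \<or> C = C_minus"
proof
  assume "admissible C"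
  define W where "W = 2 *\<^sub>R C + \<beta>0"
  have C: "C = (1/2) *\<^sub>R (W - \<beta>0)" unfolding W_def by (simp add: algebra_simps)
  have "A \<bullet> W = 0" "(norm W)\<^sup>2 = 4 * (norm A)\<^sup>2 + (norm \<beta>0)\<^sup>2"
    using \<open>admissible C\<close> admissible_half_iff[of W] C by simp_all
  define t where "t = W \<bullet> (\<i> * A) / (norm A)\<^sup>2"
  have W: "W = t *\<^sub>R (\<i> * A)" unfolding t_def by (rule orthogonal_complex_eq[OF A_nonzero \<open>A \<bullet> W = 0\<close>])
  then have "t\<^sup>2 * (norm A)\<^sup>2 = adm_scale\<^sup>2 * (norm A)\<^sup>2"
    using \<open>(norm W)\<^sup>2 = _\<close> adm_scale_sq by (simp add: norm_mult power_mult_distrib)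
  then have "t = adm_scale \<or> t = - adm_scale" using A_nonzero by (simp add: power2_eq_iff)
  then show "C = C_plus \<or> C = C_minus" unfolding C W C_plus_def C_minus_def by auto
next
  have "admissible C_plus" "admissible C_minus"
    unfolding C_plus_def C_minus_def admissible_half_iff using adm_scale_sq
    by (simp_all add: inner_complex_def norm_mult power_mult_distrib)
  then show "C = C_plus \<or> C = C_minus \<Longrightarrow> admissible C" by auto
qed

lemma C_plus_minus_C_minus: "C_plus - C_minus = adm_scale *\<^sub>R (\<i> * A)"
  unfolding C_plus_def C_minus_def by (simp add: scaleR_conv_of_real field_simps)

lemma C_plus_neq_C_minus: "C_plus \<noteq> C_minus"
proof
  assume "C_plus = C_minus"
  then have "adm_scale *\<^sub>R (\<i> * A) = 0" using C_plus_minus_C_minus by simp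
  then show False using adm_scale_pos A_nonzero by simp
qed

lemma double_point_if_both_freqs:
  assumes "C_plus \<in> freqs" "C_minus \<in> freqs"
  shows "double_point \<Gamma> \<beta>0 A"
proof -
  define \<zeta> where "\<zeta> = adm_scale *\<^sub>R (\<i> * A)"
  define R where "R = 4 * (norm A)\<^sup>2 + (norm \<beta>0)\<^sup>2"
  have "R > 0" unfolding R_def using A_nonzero by (simp add: add_pos_nonneg)
  have "\<zeta> \<in> dual_lattice \<Gamma>" using freqs_diff[OF assms] unfolding \<zeta>_def C_plus_minus_C_minus .
  moreover have norm_\<zeta>: "(norm \<zeta>)\<^sup>2 = R"
    unfolding \<zeta>_def R_def using adm_scale_sq adm_scale_pos by (simp add: norm_mult power_mult_distrib)
  then have "(norm \<beta>0)\<^sup>2 < (norm \<zeta>)\<^sup>2"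
    using A_nonzero unfolding R_def by simp
  then have "norm \<zeta> > norm \<beta>0" by (rule power2_less_imp_less[OF _ norm_ge_zero])
  moreover have "sqrt (1 - (norm \<beta>0)\<^sup>2 / (norm \<zeta>)\<^sup>2) = 2 * norm A / sqrt R"
  proof -
    have "1 - (norm \<beta>0)\<^sup>2 / (norm \<zeta>)\<^sup>2 = (2 * norm A / sqrt R)\<^sup>2"
      unfolding norm_\<zeta> using \<open>R > 0\<close> by (simp add: R_def field_simps power_divide)
    then show ?thesis using \<open>R > 0\<close> by simp
  qed
  moreover have "A = - (\<i> / 2) * \<zeta> * of_real (2 * norm A / sqrt R)"
    unfolding \<zeta>_def adm_scale_def R_def using \<open>R > 0\<close> A_nonzero
    by (simp add: R_def scaleR_conv_of_real field_simps)
  ultimately show ?thesis unfolding double_point_def by metis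
qed

lemma both_freqs_if_double_point:
  assumes "double_point \<Gamma> \<beta>0 A" "C_plus \<in> freqs \<or> C_minus \<in> freqs"
  shows "C_plus \<in> freqs \<and> C_minus \<in> freqs"
proof -
  from assms(1) obtain \<zeta> where \<zeta>: "\<zeta> \<in> dual_lattice \<Gamma>" "norm \<zeta> > norm \<beta>0"
    and A: "A = - (\<i> / 2) * \<zeta> * of_real (sqrt (1 - (norm \<beta>0)\<^sup>2 / (norm \<zeta>)\<^sup>2))"
    unfolding double_point_def by blast
  define s where "s = sqrt (1 - (norm \<beta>0)\<^sup>2 / (norm \<zeta>)\<^sup>2)"
  have "norm \<zeta> > 0" using \<zeta>(2) by (meson le_less_trans norm_ge_zero)
  have "(norm \<beta>0)\<^sup>2 < (norm \<zeta>)\<^sup>2" using power_strict_mono[OF \<zeta>(2) norm_ge_zero] by simp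
  then have s2: "s\<^sup>2 = 1 - (norm \<beta>0)\<^sup>2 / (norm \<zeta>)\<^sup>2" and "s > 0"
    unfolding s_def using \<open>norm \<zeta> > 0\<close> less_imp_le[OF \<zeta>(2)] by (simp_all add: field_simps)
  have nA: "norm A = s / 2 * norm \<zeta>" unfolding A s_def[symmetric] using \<open>s > 0\<close> by (simp add: norm_mult)
  have scale: "adm_scale = 2 / s"
  proof -
    have "4 * (norm A)\<^sup>2 + (norm \<beta>0)\<^sup>2 = (norm \<zeta>)\<^sup>2"
      unfolding nA using s2 \<open>norm \<zeta> > 0\<close> by (simp add: power_mult_distrib field_simps)
    then show ?thesis unfolding adm_scale_def nA using \<open>norm \<zeta> > 0\<close> \<open>s > 0\<close> by simp
  qed
  have iA: "\<i> * A = of_real (s / 2) * \<zeta>"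
    by (subst A) (simp add: s_def[symmetric] field_simps)
  have "adm_scale *\<^sub>R (\<i> * A) = \<zeta>"
    unfolding scale iA using \<open>s > 0\<close> by (simp add: scaleR_conv_of_real)
  then have "C_plus = C_minus + \<zeta>" using C_plus_minus_C_minus by (simp add: algebra_simps)
  moreover from this have "C_minus = C_plus - \<zeta>" by simp
  ultimately show ?thesis using assms(2) freqs_add_dual[OF _ \<zeta>(1)] freqs_diff_dual[OF _ \<zeta>(1)] by metis
qed

end

section \<open>The space of holomorphic sections\<close>

interpretation rscale: vector_space rscale
  by (rule vector_space_rscale)

lemma sum_apply: "sum f S x = (\<Sum>i\<in>S. f i x)"
  by (induction S rule: infinite_finite_induct) auto

context multiplier
begin

definition adm_freqs :: "complex set" where
  "adm_freqs = {C \<in> freqs. admissible C}"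

lemma adm_freqs_eq: "adm_freqs = {C_plus, C_minus} \<inter> freqs"
  unfolding adm_freqs_def admissible_iff by auto

lemma finite_adm_freqs: "finite adm_freqs"
  unfolding adm_freqs_eq by simp

lemma continuous_on_H0: "\<alpha> \<in> H0 \<Gamma> \<beta>0 (hAB A B) \<Longrightarrow> continuous_on UNIV \<alpha>"
  by (metis H0_parts continuous_at_imp_continuous_on has_derivative_continuous)

lemma H0_eq_0_if_coeffs_eq_0:
  assumes \<alpha>: "\<alpha> \<in> H0 \<Gamma> \<beta>0 (hAB A B)"
    and plus: "\<And>C. C \<in> freqs \<Longrightarrow> fourier_coeff (\<lambda>z. qplus (\<alpha> z)) C = 0"
    and minus: "\<And>C. C \<in> freqs \<Longrightarrow> fourier_coeff (\<lambda>z. qminus (\<alpha> z)) (C + \<beta>0) = 0"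
  shows "\<alpha> z = 0"
proof (rule quat_eqI)
  obtain qp: "quasi_periodic (\<lambda>z. qplus (\<alpha> z))" "quasi_periodic (\<lambda>z. qminus (\<alpha> z))"
    using H0_parts[OF \<alpha>] by metis
  have cont: "continuous_on UNIV (\<lambda>z. qplus (\<alpha> z))" "continuous_on UNIV (\<lambda>z. qminus (\<alpha> z))"
    using continuous_on_compose2[OF linear_continuous_on[OF bounded_linear_qplus] continuous_on_H0[OF \<alpha>]]
      continuous_on_compose2[OF linear_continuous_on[OF bounded_linear_qminus] continuous_on_H0[OF \<alpha>]]
    by blast+
  have "fourier_coeff (\<lambda>z. qminus (\<alpha> z)) C = 0" if "C \<in> freqs" for C
    using minus[OF freqs_diff_dual[OF that beta_dual]] by simp
  then show "qminus (\<alpha> z) = qminus 0"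
    using quasi_periodic_fourier_uniqueness[OF cont(2) qp(2)] by simp
  show "qplus (\<alpha> z) = qplus 0"
    using quasi_periodic_fourier_uniqueness[OF cont(1) qp(1) plus] by simp
qed

definition exp_combination :: "(complex \<Rightarrow> complex) \<Rightarrow> complex \<Rightarrow> quat" where
  "exp_combination c = (\<Sum>C\<in>adm_freqs. rscale (c C) (exp_section C))"

lemma exp_combination_in_H0: "exp_combination c \<in> H0 \<Gamma> \<beta>0 (hAB A B)"
  unfolding exp_combination_def adm_freqs_def
  by (intro rscale.subspace_sum[OF H0_subspace] rscale.subspace_scale[OF H0_subspace] exp_section_in_H0) auto

lemma qplus_exp_combination:
  "qplus (exp_combination c z) = (\<Sum>C\<in>adm_freqs. c C * kernel_plus C * exp (expo C z))"
  and qminus_exp_combination: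
  "qminus (exp_combination c z) = (\<Sum>C\<in>adm_freqs. c C * kernel_minus C * exp (expo (C + \<beta>0) z))"
  unfolding exp_combination_def sum_apply rscale_def
  by (simp_all add: linear_sum[OF bounded_linear.linear[OF bounded_linear_qplus]]
      linear_sum[OF bounded_linear.linear[OF bounded_linear_qminus]]
      qplus_mult_qc qminus_mult_qc qplus_exp_section qminus_exp_section mult_ac)

lemma fourier_coeff_qplus_exp_combination:
  assumes "C \<in> freqs"
  shows "fourier_coeff (\<lambda>z. qplus (exp_combination c z)) C = (if C \<in> adm_freqs then c C * kernel_plus C else 0)"
proof -
  have "fourier_coeff (\<lambda>z. qplus (exp_combination c z)) C =
      (\<Sum>C'\<in>adm_freqs. fourier_coeff (\<lambda>z. c C' * kernel_plus C' * exp (expo C' z)) C)"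
    unfolding qplus_exp_combination
    by (intro fourier_coeff_sum finite_adm_freqs continuous_intros continuous_on_exp_expo)
  also have "\<dots> = (\<Sum>C'\<in>adm_freqs. if C = C' then c C' * kernel_plus C' else 0)"
    using assms by (intro sum.cong) (auto simp: adm_freqs_def fourier_coeff_cmult fourier_coeff_exp_expo)
  finally show ?thesis using finite_adm_freqs by simp
qed

lemma fourier_coeff_qminus_exp_combination:
  assumes "C \<in> freqs"
  shows "fourier_coeff (\<lambda>z. qminus (exp_combination c z)) (C + \<beta>0) =
    (if C \<in> adm_freqs then c C * kernel_minus C else 0)"
proof -
  have "fourier_coeff (\<lambda>z. qminus (exp_combination c z)) (C + \<beta>0) =
      (\<Sum>C'\<in>adm_freqs. fourier_coeff (\<lambda>z. c C' * kernel_minus C' * exp (expo (C' + \<beta>0) z)) (C + \<beta>0))"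
    unfolding qminus_exp_combination
    by (intro fourier_coeff_sum finite_adm_freqs continuous_intros continuous_on_exp_expo)
  also have "\<dots> = (\<Sum>C'\<in>adm_freqs. if C = C' then c C' * kernel_minus C' else 0)"
    using assms
    by (intro sum.cong) (auto simp: adm_freqs_def fourier_coeff_cmult fourier_coeff_exp_expo freqs_add_dual beta_dual)
  finally show ?thesis using finite_adm_freqs by simp
qed

lemma H0_eq_exp_combination:
  assumes \<alpha>: "\<alpha> \<in> H0 \<Gamma> \<beta>0 (hAB A B)"
  obtains c where "\<alpha> = exp_combination c"
proof -
  have "\<forall>C\<in>adm_freqs. \<exists>x. fourier_coeff (\<lambda>z. qplus (\<alpha> z)) C = x * kernel_plus C \<and>
      fourier_coeff (\<lambda>z. qminus (\<alpha> z)) (C + \<beta>0) = x * kernel_minus C"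
    using H0_coeffs_admissible[OF \<alpha>] unfolding adm_freqs_def by blast
  then obtain c where c: "\<And>C. C \<in> adm_freqs \<Longrightarrow> fourier_coeff (\<lambda>z. qplus (\<alpha> z)) C = c C * kernel_plus C \<and>
      fourier_coeff (\<lambda>z. qminus (\<alpha> z)) (C + \<beta>0) = c C * kernel_minus C"
    by metis
  define \<delta> where "\<delta> = \<alpha> - exp_combination c"
  have \<delta>: "\<delta> \<in> H0 \<Gamma> \<beta>0 (hAB A B)"
    unfolding \<delta>_def by (rule rscale.subspace_diff[OF H0_subspace \<alpha> exp_combination_in_H0])
  have cont: "continuous_on UNIV (\<lambda>z. q (\<alpha> z))" "continuous_on UNIV (\<lambda>z. q (exp_combination c z))"
    if "bounded_linear q" for q :: "quat \<Rightarrow> complex"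
    using continuous_on_compose2[OF linear_continuous_on[OF that] continuous_on_H0[OF \<alpha>]]
      continuous_on_compose2[OF linear_continuous_on[OF that] continuous_on_H0[OF exp_combination_in_H0]]
    by blast+
  have "\<delta> z = 0" for z
  proof (rule H0_eq_0_if_coeffs_eq_0[OF \<delta>])
    fix C assume "C \<in> freqs"
    show "fourier_coeff (\<lambda>z. qplus (\<delta> z)) C = 0"
      using fourier_coeff_diff[OF cont[OF bounded_linear_qplus]] c[of C]
        H0_coeffs_not_admissible[OF \<alpha> \<open>C \<in> freqs\<close>]
      by (simp add: \<delta>_def linear_diff[OF bounded_linear.linear[OF bounded_linear_qplus]]
          fourier_coeff_qplus_exp_combination[OF \<open>C \<in> freqs\<close>] adm_freqs_def \<open>C \<in> freqs\<close>)
    show "fourier_coeff (\<lambda>z. qminus (\<delta> z)) (C + \<beta>0) = 0"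
      using fourier_coeff_diff[OF cont[OF bounded_linear_qminus]] c[of C]
        H0_coeffs_not_admissible[OF \<alpha> \<open>C \<in> freqs\<close>]
      by (simp add: \<delta>_def linear_diff[OF bounded_linear.linear[OF bounded_linear_qminus]]
          fourier_coeff_qminus_exp_combination[OF \<open>C \<in> freqs\<close>] adm_freqs_def \<open>C \<in> freqs\<close>)
  qed
  then have "\<alpha> = exp_combination c" unfolding \<delta>_def by (simp add: fun_eq_iff)
  then show ?thesis by (rule that)
qed

lemma exp_combination_eq_0:
  assumes "exp_combination c = 0" "C \<in> adm_freqs"
  shows "c C = 0"
proof -
  have "C \<in> freqs" using assms(2) unfolding adm_freqs_def by simp
  have "c C * kernel_plus C = 0" "c C * kernel_minus C = 0"
    using fourier_coeff_qplus_exp_combination[OF \<open>C \<in> freqs\<close>, of c]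
      fourier_coeff_qminus_exp_combination[OF \<open>C \<in> freqs\<close>, of c] assms
    by (simp_all add: fourier_coeff_def)
  then show ?thesis using kernel_plus_minus_nonzero[of C] by auto
qed

lemma inj_on_exp_section: "inj_on exp_section adm_freqs"
proof (rule inj_onI, rule ccontr)
  fix C C' assume "C \<in> adm_freqs" "C' \<in> adm_freqs" "exp_section C = exp_section C'" "C \<noteq> C'"
  then have "C \<in> freqs" "C' \<in> freqs" "C + \<beta>0 \<in> freqs"
    unfolding adm_freqs_def using freqs_add_dual beta_dual by auto
  then have "kernel_plus C = 0" "kernel_minus C = 0"
    using fourier_coeff_qplus_exp_section[of C C] fourier_coeff_qplus_exp_section[of C' C]
      fourier_coeff_qminus_exp_section[of C "C + \<beta>0"] fourier_coeff_qminus_exp_section[of C' "C + \<beta>0"]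
      \<open>exp_section C = exp_section C'\<close> \<open>C \<noteq> C'\<close>
    by auto
  then show False using kernel_plus_minus_nonzero by blast
qed

lemma independent_exp_sections: "rscale.independent (exp_section ` adm_freqs)"
proof (rule rscale.independent_if_scalars_zero)
  show "finite (exp_section ` adm_freqs)" using finite_adm_freqs by simp
  fix f s assume sum: "(\<Sum>x\<in>exp_section ` adm_freqs. rscale (f x) x) = 0" and "s \<in> exp_section ` adm_freqs"
  then obtain C where "C \<in> adm_freqs" "s = exp_section C" by blast
  have "exp_combination (\<lambda>C. f (exp_section C)) = 0"
    using sum unfolding exp_combination_def sum.reindex[OF inj_on_exp_section] by (simp add: o_def)
  then show "f s = 0" using exp_combination_eq_0 \<open>C \<in> adm_freqs\<close> \<open>s = exp_section C\<close> by blast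
qed

lemma H0_eq_span: "H0 \<Gamma> \<beta>0 (hAB A B) = rscale.span (exp_section ` adm_freqs)"
proof
  show "H0 \<Gamma> \<beta>0 (hAB A B) \<subseteq> rscale.span (exp_section ` adm_freqs)"
  proof
    fix \<alpha> assume "\<alpha> \<in> H0 \<Gamma> \<beta>0 (hAB A B)"
    then obtain c where "\<alpha> = exp_combination c" by (rule H0_eq_exp_combination)
    then show "\<alpha> \<in> rscale.span (exp_section ` adm_freqs)"
      unfolding exp_combination_def by (simp only:) (intro rscale.span_sum rscale.span_scale rscale.span_base imageI)
  qed
  show "rscale.span (exp_section ` adm_freqs) \<subseteq> H0 \<Gamma> \<beta>0 (hAB A B)"
    using exp_section_in_H0 H0_subspace unfolding adm_freqs_def by (intro rscale.span_minimal) auto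
qed

lemma cdim_H0: "cdim (H0 \<Gamma> \<beta>0 (hAB A B)) = card adm_freqs"
  unfolding cdim_def H0_eq_span rscale.dim_span_eq_card_independent[OF independent_exp_sections]
  by (rule card_image[OF inj_on_exp_section])

lemma cfinite_dim_H0: "cfinite_dim (H0 \<Gamma> \<beta>0 (hAB A B))"
  unfolding cfinite_dim_def H0_eq_span
  by (intro exI[of _ "exp_section ` adm_freqs"]) (simp add: finite_adm_freqs rscale.span_superset)

lemma card_adm_freqs_le_2: "card adm_freqs \<le> 2"
proof -
  have "card adm_freqs \<le> card {C_plus, C_minus}" unfolding adm_freqs_eq by (rule card_mono) auto
  also have "\<dots> \<le> 2" by (simp add: card_insert_le_m1)
  finally show ?thesis .
qed

lemma card_adm_freqs_eq_2_iff:
  assumes "adm_freqs \<noteq> {}"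
  shows "card adm_freqs = 2 \<longleftrightarrow> double_point \<Gamma> \<beta>0 A"
proof -
  have "card adm_freqs = 2 \<longleftrightarrow> C_plus \<in> freqs \<and> C_minus \<in> freqs"
    unfolding adm_freqs_eq using C_plus_neq_C_minus
    by (cases "C_plus \<in> freqs"; cases "C_minus \<in> freqs") (simp_all add: Int_insert_left)
  moreover have "C_plus \<in> freqs \<or> C_minus \<in> freqs" using assms unfolding adm_freqs_eq by auto
  ultimately show ?thesis using double_point_if_both_freqs both_freqs_if_double_point by blast
qed

lemma adm_freqs_nonempty: "H0 \<Gamma> \<beta>0 (hAB A B) \<noteq> {0} \<Longrightarrow> adm_freqs \<noteq> {}"
  using H0_eq_span rscale.span_empty by auto

end

theorem lemma2p5:
  fixes \<Gamma> :: "complex set" and \<beta>0 A B :: complex and f g :: "complex \<Rightarrow> quat"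
  assumes "ham_stat_torus \<Gamma> \<beta>0 f g"
    and "hAB A B \<in> Spec \<Gamma> \<beta>0"
    and "A \<noteq> 0"
  shows "cfinite_dim (H0 \<Gamma> \<beta>0 (hAB A B)) \<and> cdim (H0 \<Gamma> \<beta>0 (hAB A B)) \<le> 2 \<and>
         (cdim (H0 \<Gamma> \<beta>0 (hAB A B)) = 2 \<longleftrightarrow> double_point \<Gamma> \<beta>0 A)"
proof -
  from assms(1) obtain w1 w2 where "Im (cnj w1 * w2) \<noteq> 0" "\<Gamma> = {of_int m * w1 + of_int n * w2 | m n. True}"
    and "\<beta>0 \<in> dual_lattice \<Gamma>"
    unfolding ham_stat_torus_def is_lattice_def by blast
  then interpret multiplier w1 w2 \<Gamma> \<beta>0 A B
    using assms(3) by unfold_locales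
  have "adm_freqs \<noteq> {}"
    using assms(2) adm_freqs_nonempty unfolding Spec_def by blast
  then show ?thesis
    using cfinite_dim_H0 cdim_H0 card_adm_freqs_le_2 card_adm_freqs_eq_2_iff by simp
qed

end
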